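(* For all integers $a$ and $\ell$ with $3\le a\le\ell$ there is a connected graph $F$ with $v(F)=\ell$ and $\mathrm{tw}(F)=a-1$ such that $D_{\mathrm{tw}}(F)\le a$. Specifically, $D_{\mathrm{tw}}(L_{a,b})=W_\kappa(L_{a,b})=a$ for all $a\ge3$ and $b\ge0$.
   Context: Graphs are finite simple graphs; $v(F)$ is the number of vertices and $\mathrm{tw}(F)$ the treewidth. A graph is $k$-connected if it has more than $k$ vertices, is connected, and remains connected after removal of any $k-1$ vertices; the connectivity $\kappa(G)$ is the maximum $k$ such that $G$ is $k$-connected. We use first-order logic of graphs with relation symbols for adjacency and equality only; the variable width of a sentence is the number of distinct variables it uses. For a graph parameter $\pi$, $D_\pi(F)$ (resp. $W_\pi(F)$) is the minimum quantifier depth (resp. variable width) of a first-order sentence $\Phi$ for which there is an integer $k$ such that for every connected graph $G$ with $\pi(G)\ge k$, $G\models\Phi$ if and only if $G$ contains a (not necessarily induced) subgraph isomorphic to $F$. For $a\ge3$, $b\ge1$, the lollipop graph $L_{a,b}$ is obtained from the complete graph $K_a$ and the path $P_b$ on $b$ vertices by adding an edge between an end vertex of $P_b$ and a vertex of $K_a$; by convention $L_{a,0}=K_a$. *)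

theory Defs
  imports Main
begin

type_synonym graph = "nat set \<times> (nat \<times> nat) set"

abbreviation verts :: "graph \<Rightarrow> nat set" where "verts G \<equiv> fst G"
abbreviation edges :: "graph \<Rightarrow> (nat \<times> nat) set" where "edges G \<equiv> snd G"

definition wf_graph :: "graph \<Rightarrow> bool" where
  "wf_graph G \<longleftrightarrow> finite (verts G) \<and> edges G \<subseteq> verts G \<times> verts G
     \<and> (\<forall>u v. (u, v) \<in> edges G \<longrightarrow> (v, u) \<in> edges G)
     \<and> (\<forall>v. (v, v) \<notin> edges G)"

definition induced :: "graph \<Rightarrow> nat set \<Rightarrow> graph" where
  "induced G S = (verts G \<inter> S, edges G \<inter> ((verts G \<inter> S) \<times> (verts G \<inter> S)))"

definition connected_graph :: "graph \<Rightarrow> bool" where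
  "connected_graph G \<longleftrightarrow> verts G \<noteq> {} \<and>
     (\<forall>u\<in>verts G. \<forall>v\<in>verts G. (u, v) \<in> (edges G)\<^sup>*)"

definition contains_subgraph :: "graph \<Rightarrow> graph \<Rightarrow> bool" where
  "contains_subgraph G F \<longleftrightarrow> (\<exists>f. inj_on f (verts F) \<and> f ` verts F \<subseteq> verts G \<and>
     (\<forall>u v. (u, v) \<in> edges F \<longrightarrow> (f u, f v) \<in> edges G))"

definition k_connected :: "graph \<Rightarrow> nat \<Rightarrow> bool" where
  "k_connected G k \<longleftrightarrow> card (verts G) > k \<and> connected_graph G \<and>
     (\<forall>S. S \<subseteq> verts G \<and> card S < k \<longrightarrow> connected_graph (induced G (verts G - S)))"

definition kappa :: "graph \<Rightarrow> nat" where
  "kappa G = (GREATEST k. k_connected G k)"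

definition has_cycle :: "graph \<Rightarrow> bool" where
  "has_cycle G \<longleftrightarrow> (\<exists>vs. length vs \<ge> 3 \<and> distinct vs \<and> set vs \<subseteq> verts G \<and>
     (\<forall>i. i + 1 < length vs \<longrightarrow> (vs ! i, vs ! (i + 1)) \<in> edges G) \<and>
     (last vs, hd vs) \<in> edges G)"

definition is_tree :: "graph \<Rightarrow> bool" where
  "is_tree T \<longleftrightarrow> wf_graph T \<and> connected_graph T \<and> \<not> has_cycle T"

definition tree_decomposition :: "graph \<Rightarrow> graph \<Rightarrow> (nat \<Rightarrow> nat set) \<Rightarrow> bool" where
  "tree_decomposition G T X \<longleftrightarrow> is_tree T \<and>
     (\<forall>i\<in>verts T. X i \<subseteq> verts G) \<and>
     (\<forall>v\<in>verts G. \<exists>i\<in>verts T. v \<in> X i) \<and>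
     (\<forall>u v. (u, v) \<in> edges G \<longrightarrow> (\<exists>i\<in>verts T. u \<in> X i \<and> v \<in> X i)) \<and>
     (\<forall>v\<in>verts G. connected_graph (induced T {i \<in> verts T. v \<in> X i}))"

definition td_width :: "graph \<Rightarrow> (nat \<Rightarrow> nat set) \<Rightarrow> nat" where
  "td_width T X = Max ((\<lambda>i. card (X i)) ` verts T) - 1"

definition treewidth :: "graph \<Rightarrow> nat" where
  "treewidth G = (LEAST w. \<exists>T X. tree_decomposition G T X \<and> td_width T X = w)"

datatype fo = Adj nat nat | Eq nat nat | Neg fo | Conj fo fo | Disj fo fo
  | Ex nat fo | All nat fo

fun sat :: "graph \<Rightarrow> (nat \<Rightarrow> nat) \<Rightarrow> fo \<Rightarrow> bool" where
  "sat G s (Adj x y) = ((s x, s y) \<in> edges G)"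
| "sat G s (Eq x y) = (s x = s y)"
| "sat G s (Neg \<phi>) = (\<not> sat G s \<phi>)"
| "sat G s (Conj \<phi> \<psi>) = (sat G s \<phi> \<and> sat G s \<psi>)"
| "sat G s (Disj \<phi> \<psi>) = (sat G s \<phi> \<or> sat G s \<psi>)"
| "sat G s (Ex x \<phi>) = (\<exists>v\<in>verts G. sat G (s(x := v)) \<phi>)"
| "sat G s (All x \<phi>) = (\<forall>v\<in>verts G. sat G (s(x := v)) \<phi>)"

fun free_vars :: "fo \<Rightarrow> nat set" where
  "free_vars (Adj x y) = {x, y}"
| "free_vars (Eq x y) = {x, y}"
| "free_vars (Neg \<phi>) = free_vars \<phi>"
| "free_vars (Conj \<phi> \<psi>) = free_vars \<phi> \<union> free_vars \<psi>"
| "free_vars (Disj \<phi> \<psi>) = free_vars \<phi> \<union> free_vars \<psi>"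
| "free_vars (Ex x \<phi>) = free_vars \<phi> - {x}"
| "free_vars (All x \<phi>) = free_vars \<phi> - {x}"

fun all_vars :: "fo \<Rightarrow> nat set" where
  "all_vars (Adj x y) = {x, y}"
| "all_vars (Eq x y) = {x, y}"
| "all_vars (Neg \<phi>) = all_vars \<phi>"
| "all_vars (Conj \<phi> \<psi>) = all_vars \<phi> \<union> all_vars \<psi>"
| "all_vars (Disj \<phi> \<psi>) = all_vars \<phi> \<union> all_vars \<psi>"
| "all_vars (Ex x \<phi>) = insert x (all_vars \<phi>)"
| "all_vars (All x \<phi>) = insert x (all_vars \<phi>)"

fun qdepth :: "fo \<Rightarrow> nat" where
  "qdepth (Adj x y) = 0"
| "qdepth (Eq x y) = 0"
| "qdepth (Neg \<phi>) = qdepth \<phi>"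
| "qdepth (Conj \<phi> \<psi>) = max (qdepth \<phi>) (qdepth \<psi>)"
| "qdepth (Disj \<phi> \<psi>) = max (qdepth \<phi>) (qdepth \<psi>)"
| "qdepth (Ex x \<phi>) = Suc (qdepth \<phi>)"
| "qdepth (All x \<phi>) = Suc (qdepth \<phi>)"

definition var_width :: "fo \<Rightarrow> nat" where
  "var_width \<phi> = card (all_vars \<phi>)"

definition sentence :: "fo \<Rightarrow> bool" where
  "sentence \<phi> \<longleftrightarrow> free_vars \<phi> = {}"

definition models :: "graph \<Rightarrow> fo \<Rightarrow> bool" where
  "models G \<phi> \<longleftrightarrow> (\<forall>s. sat G s \<phi>)"

definition defines_subgraph :: "(graph \<Rightarrow> nat) \<Rightarrow> graph \<Rightarrow> fo \<Rightarrow> bool" where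
  "defines_subgraph \<pi> F \<Phi> \<longleftrightarrow> sentence \<Phi> \<and> (\<exists>k. \<forall>G. wf_graph G \<and> connected_graph G \<and> \<pi> G \<ge> k
       \<longrightarrow> (models G \<Phi> \<longleftrightarrow> contains_subgraph G F))"

definition D_par :: "(graph \<Rightarrow> nat) \<Rightarrow> graph \<Rightarrow> nat" where
  "D_par \<pi> F = (LEAST d. \<exists>\<Phi>. defines_subgraph \<pi> F \<Phi> \<and> qdepth \<Phi> = d)"

definition W_par :: "(graph \<Rightarrow> nat) \<Rightarrow> graph \<Rightarrow> nat" where
  "W_par \<pi> F = (LEAST w. \<exists>\<Phi>. defines_subgraph \<pi> F \<Phi> \<and> var_width \<Phi> = w)"

text \<open>L a b: clique on 0..a-1, path on a..a+b-1, edge between a-1 and a (if b \<ge> 1).\<close>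
definition lollipop :: "nat \<Rightarrow> nat \<Rightarrow> graph" where
  "lollipop a b = ({0..<a+b},
     {(i, j). i < a + b \<and> j < a + b \<and>
        ((i < a \<and> j < a \<and> i \<noteq> j) \<or> (min i j \<ge> a - 1 \<and> (i = j + 1 \<or> j = i + 1)))})"

end

theory Submission
  imports Defs
begin

text \<open>Containing \<open>L a b\<close> amounts to containing an \<open>a\<close>-clique in connected graphs of large
  treewidth or of large connectivity. With connectivity at least \<open>a + b\<close>, every vertex has degree
  at least \<open>a + b\<close>, so a path of \<open>b\<close> further vertices can be grown greedily from the clique. If
  a clique \<open>Q\<close> has no such path attached, then from the vertex where a component of \<open>G - Q\<close>
  attaches to \<open>Q\<close> all paths in that component have fewer than \<open>b\<close> vertices, so the component
  has treedepth below \<open>b\<close>; putting \<open>Q\<close> on top of these elimination trees gives a tree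
  decomposition of width at most \<open>a + b - 2\<close>. The \<open>a\<close>-clique sentence has quantifier depth
  and width \<open>a\<close>.

  Conversely, the complete \<open>a\<close>-partite and \<open>(a - 1)\<close>-partite graphs with large parts are
  connected with large treewidth and connectivity, and only the first contains \<open>L a b\<close>. A
  back-and-forth argument shows that they satisfy the same sentences in which every quantified
  subformula has at most \<open>a - 2\<close> free variables; this includes every sentence of quantifier
  depth or width less than \<open>a\<close>.\<close>

lemma
  assumes "wf_graph G"
  shows wf_graph_finite: "finite (verts G)"
    and wf_graph_edge_verts: "(u, v) \<in> edges G \<Longrightarrow> u \<in> verts G \<and> v \<in> verts G"
    and wf_graph_sym: "sym (edges G)"
    and wf_graph_irrefl: "(v, v) \<notin> edges G"
  using assms unfolding wf_graph_def sym_def by blast+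

lemma wf_graph_rtrancl_sym: "wf_graph G \<Longrightarrow> (u, v) \<in> (edges G)\<^sup>* \<Longrightarrow> (v, u) \<in> (edges G)\<^sup>*"
  by (metis symD sym_rtrancl wf_graph_sym)

lemma rtrancl_first_step: "(x, z) \<in> r\<^sup>* \<Longrightarrow> x \<noteq> z \<Longrightarrow> \<exists>y. (x, y) \<in> r"
  by (induction rule: converse_rtrancl_induct) auto

definition degree :: "graph \<Rightarrow> nat \<Rightarrow> nat" where
  "degree G v = card {u. (v, u) \<in> edges G}"

lemma verts_induced [simp]: "verts (induced G S) = verts G \<inter> S"
  by (simp add: induced_def)

lemma edges_induced [simp]: "edges (induced G S) = edges G \<inter> (verts G \<inter> S) \<times> (verts G \<inter> S)"
  by (simp add: induced_def)

lemma induced_induced: "induced (induced G S) S' = induced G (S \<inter> S')"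
  unfolding induced_def by auto

lemma wf_graph_induced: "wf_graph G \<Longrightarrow> wf_graph (induced G S)"
  unfolding wf_graph_def induced_def by auto

lemma induced_subset_eq: "S \<subseteq> verts G \<Longrightarrow> induced G S = (S, edges G \<inter> S \<times> S)"
  unfolding induced_def by (simp add: Int_absorb1)

lemma induced_verts: "wf_graph G \<Longrightarrow> induced G (verts G) = G"
  unfolding induced_def wf_graph_def by (simp add: Int_absorb2)

lemma connected_graph_rtrancl_sym:
  assumes "sym R" "r \<in> V" "\<And>v. v \<in> V \<Longrightarrow> (v, r) \<in> R\<^sup>*"
  shows "connected_graph (V, R)"
  unfolding connected_graph_def
proof (intro conjI ballI)
  fix u v assume "u \<in> verts (V, R)" "v \<in> verts (V, R)"
  then have "(u, r) \<in> R\<^sup>*" "(r, v) \<in> R\<^sup>*"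
    using assms(3) symD[OF sym_rtrancl[OF assms(1)]] by auto
  then show "(u, v) \<in> (edges (V, R))\<^sup>*" by simp
qed (use assms(2) in auto)

definition is_path :: "graph \<Rightarrow> nat list \<Rightarrow> bool" where
  "is_path G vs \<longleftrightarrow> distinct vs \<and> set vs \<subseteq> verts G \<and>
     (\<forall>k. k + 1 < length vs \<longrightarrow> (vs ! k, vs ! (k + 1)) \<in> edges G)"

lemma is_path_length_le: "finite (verts G) \<Longrightarrow> is_path G vs \<Longrightarrow> length vs \<le> card (verts G)"
  unfolding is_path_def by (metis card_mono distinct_card)

lemma is_path_snoc:
  "is_path G vs \<Longrightarrow> vs \<noteq> [] \<Longrightarrow> z \<in> verts G \<Longrightarrow> z \<notin> set vs \<Longrightarrow> (last vs, z) \<in> edges G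
   \<Longrightarrow> is_path G (vs @ [z])"
  unfolding is_path_def
  by (auto simp: nth_append) (metis Suc_lessI diff_Suc_1 last_conv_nth less_diff_conv)

lemma is_path_Cons:
  "is_path G vs \<Longrightarrow> vs \<noteq> [] \<Longrightarrow> x \<in> verts G \<Longrightarrow> x \<notin> set vs \<Longrightarrow> (x, hd vs) \<in> edges G
   \<Longrightarrow> is_path G (x # vs)"
  unfolding is_path_def by (auto simp: nth_Cons hd_conv_nth split: nat.split)

lemma is_path_take: "is_path G vs \<Longrightarrow> is_path G (take n vs)"
  unfolding is_path_def by (auto dest: in_set_takeD)

lemma is_path_induced: "is_path (induced G S) vs \<Longrightarrow> is_path G vs"
  unfolding is_path_def by auto

definition component :: "graph \<Rightarrow> nat \<Rightarrow> nat set" where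
  "component G v = {w \<in> verts G. (v, w) \<in> (edges G)\<^sup>*}"

lemma component_subset: "component G v \<subseteq> verts G"
  unfolding component_def by auto

lemma component_self: "v \<in> verts G \<Longrightarrow> v \<in> component G v"
  unfolding component_def by auto

lemma component_edge:
  "wf_graph G \<Longrightarrow> u \<in> component G v \<Longrightarrow> (u, w) \<in> edges G \<Longrightarrow> w \<in> component G v"
  unfolding component_def by (auto dest: wf_graph_edge_verts intro: rtrancl_into_rtrancl)

lemma component_eq:
  assumes "wf_graph G" "w \<in> component G v"
  shows "component G w = component G v"
  using assms wf_graph_rtrancl_sym[OF assms(1)] unfolding component_def
  by (auto intro: rtrancl_trans)

lemma edges_induced_component:
  "wf_graph G \<Longrightarrow> u \<in> component G v \<Longrightarrow> (u, w) \<in> edges G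
   \<Longrightarrow> (u, w) \<in> edges (induced G (component G v))"
  using component_edge component_subset by fastforce

lemma connected_component:
  assumes wf: "wf_graph G" and v: "v \<in> verts G"
  shows "connected_graph (induced G (component G v))"
proof -
  let ?C = "component G v"
  have ind: "induced G ?C = (?C, edges G \<inter> ?C \<times> ?C)"
    using induced_subset_eq[OF component_subset] .
  have reach: "(v, w) \<in> (edges G \<inter> ?C \<times> ?C)\<^sup>*" if "(v, w) \<in> (edges G)\<^sup>*" for w
    using that
  proof (induction rule: rtrancl_induct)
    case (step u w)
    then have "u \<in> ?C" using v rtrancl_into_rtrancl[of v u "edges G" w] wf
      unfolding component_def by (auto dest: wf_graph_edge_verts)
    then show ?case using step component_edge[OF wf] by (blast intro: rtrancl_into_rtrancl)
  qed simp
  have sym: "sym (edges G \<inter> ?C \<times> ?C)"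
    using wf_graph_sym[OF wf] by (auto simp: sym_def)
  have "(w, v) \<in> (edges G \<inter> ?C \<times> ?C)\<^sup>*" if "w \<in> ?C" for w
    using reach that sym_rtrancl[OF sym] unfolding component_def by (auto dest: symD)
  then show ?thesis
    unfolding ind using connected_graph_rtrancl_sym[OF sym] component_self[OF v] by blast
qed

lemma component_edge_to_deleted:
  assumes wf: "wf_graph G" and con: "connected_graph G"
    and s: "s \<in> S" "s \<in> verts G" and v: "v \<in> verts G - S"
  shows "\<exists>u \<in> component (induced G (verts G - S)) v. \<exists>x \<in> S. (u, x) \<in> edges G"
proof -
  let ?H = "induced G (verts G - S)"
  have "(v, s) \<in> (edges G)\<^sup>*" using con v s unfolding connected_graph_def by auto
  then show ?thesis
    using v
  proof (induction rule: converse_rtrancl_induct)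
    case base then show ?case using s by simp
  next
    case (step y y')
    have yH: "y \<in> verts ?H" using step.prems by simp
    show ?case
    proof (cases "y' \<in> S")
      case True then show ?thesis using step.hyps(1) component_self[OF yH] by blast
    next
      case False
      then have "(y, y') \<in> edges ?H" using step.hyps(1) step.prems wf_graph_edge_verts[OF wf] by auto
      then have "component ?H y' = component ?H y"
        using component_edge[OF wf_graph_induced[OF wf] component_self[OF yH]] component_eq wf wf_graph_induced
        by metis
      then show ?thesis using step.IH False wf_graph_edge_verts[OF wf step.hyps(1)] by auto
    qed
  qed
qed

subsection \<open>Trees given by parent pointers\<close>

text \<open>On a cycle, the vertex of largest rank would have both of its cycle neighbours equal to its
  parent.\<close>

lemma not_has_cycle_if_parent_rank:
  assumes E: "\<And>x y. (x, y) \<in> edges G \<Longrightarrow>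
    (x = par y \<and> (rk x :: nat) < rk y) \<or> (y = par x \<and> rk y < rk x)"
  shows "\<not> has_cycle G"
proof
  assume "has_cycle G"
  then obtain vs where n3: "length vs \<ge> 3" and dis: "distinct vs"
    and cons: "\<And>i. i + 1 < length vs \<Longrightarrow> (vs ! i, vs ! (i + 1)) \<in> edges G"
    and cl: "(last vs, hd vs) \<in> edges G"
    unfolding has_cycle_def by auto
  define n where "n = length vs"
  let ?R = "(\<lambda>q. rk (vs ! q)) ` {..<n}"
  have R: "finite ?R" "?R \<noteq> {}" using n3 n_def by (auto simp: lessThan_empty_iff)
  obtain p where p: "p < n" and pmax: "rk (vs ! p) = Max ?R"
    using Max_in[OF R] by auto
  have mx: "rk (vs ! q) \<le> rk (vs ! p)" if "q < n" for q
    using Max_ge[OF R(1)] that pmax by simp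
  define nxt where "nxt q = (if q + 1 < n then q + 1 else 0)" for q
  have step: "(vs ! q, vs ! nxt q) \<in> edges G" if "q < n" for q
  proof (cases "q + 1 < n")
    case True then show ?thesis using cons n_def nxt_def by simp
  next
    case False
    then have "q = n - 1" using that by simp
    moreover have "vs \<noteq> []" using n3 by auto
    ultimately show ?thesis using cl n_def False nxt_def by (simp add: last_conv_nth hd_conv_nth)
  qed
  have to_par: "vs ! q = par (vs ! p)"
    if "q < n" "(vs ! p, vs ! q) \<in> edges G \<or> (vs ! q, vs ! p) \<in> edges G" for q
    using E[of "vs ! p" "vs ! q"] E[of "vs ! q" "vs ! p"] mx[OF that(1)] that(2) by auto
  define pv where "pv = (if 0 < p then p - 1 else n - 1)"
  have "nxt p < n" "pv < n" "nxt p \<noteq> pv" using p n3 n_def unfolding nxt_def pv_def by auto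
  moreover have "nxt pv = p" using p n3 n_def unfolding nxt_def pv_def by auto
  then have "(vs ! pv, vs ! p) \<in> edges G" using step \<open>pv < n\<close> by metis
  then have "vs ! nxt p = vs ! pv"
    using to_par[of "nxt p"] to_par[of pv] step[OF p] \<open>nxt p < n\<close> \<open>pv < n\<close> by simp
  ultimately show False using dis n_def nth_eq_iff_index_eq by metis
qed

definition parent_tree :: "nat set \<Rightarrow> nat \<Rightarrow> (nat \<Rightarrow> nat) \<Rightarrow> graph" where
  "parent_tree V r par = (V, {(i, par i) | i. i \<in> V - {r}} \<union> {(par i, i) | i. i \<in> V - {r}})"

lemma sym_parent_tree: "sym (edges (parent_tree V r par) \<inter> B \<times> B)"
  unfolding parent_tree_def sym_def by auto

context
  fixes V :: "nat set" and r :: nat and par rk :: "nat \<Rightarrow> nat"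
  assumes parent: "\<And>i. i \<in> V - {r} \<Longrightarrow> par i \<in> V \<and> rk (par i) < rk i"
begin

lemma parent_tree_reach:
  assumes B: "\<And>i. i \<in> B \<Longrightarrow> i \<noteq> t \<Longrightarrow> i \<in> V - {r} \<and> par i \<in> B" and i: "i \<in> B"
  shows "(i, t) \<in> (edges (parent_tree V r par) \<inter> B \<times> B)\<^sup>*"
  using i
proof (induction "rk i" arbitrary: i rule: less_induct)
  case less
  show ?case
  proof (cases "i = t")
    case False
    then have h: "i \<in> V - {r}" "par i \<in> B" using B less.prems by auto
    then have "(par i, t) \<in> (edges (parent_tree V r par) \<inter> B \<times> B)\<^sup>*"
      using less parent by auto
    moreover have "(i, par i) \<in> edges (parent_tree V r par) \<inter> B \<times> B"
      using h less.prems unfolding parent_tree_def by auto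
    ultimately show ?thesis by (meson converse_rtrancl_into_rtrancl)
  qed simp
qed

lemma is_tree_parent_tree:
  assumes "finite V" "r \<in> V"
  shows "is_tree (parent_tree V r par)"
  unfolding is_tree_def
proof (intro conjI)
  show "wf_graph (parent_tree V r par)"
    unfolding wf_graph_def parent_tree_def using assms parent by auto (metis less_irrefl)+
  have "(i, r) \<in> (edges (parent_tree V r par) \<inter> V \<times> V)\<^sup>*" if "i \<in> V" for i
    by (rule parent_tree_reach) (use parent that in auto)
  then have "connected_graph (V, edges (parent_tree V r par) \<inter> V \<times> V)"
    using connected_graph_rtrancl_sym[OF sym_parent_tree assms(2)] by blast
  moreover have "edges (parent_tree V r par) \<inter> V \<times> V = edges (parent_tree V r par)"
    using parent assms(2) unfolding parent_tree_def by auto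
  ultimately show "connected_graph (parent_tree V r par)" by (simp add: parent_tree_def)
  show "\<not> has_cycle (parent_tree V r par)"
    by (rule not_has_cycle_if_parent_rank[where par = par and rk = rk])
      (use parent in \<open>auto simp: parent_tree_def\<close>)
qed

lemma tree_decomposition_parent_tree:
  assumes fin: "finite V" and r: "r \<in> V"
    and bags: "\<And>i. i \<in> V \<Longrightarrow> X i \<subseteq> verts G"
    and edge: "\<And>u v. (u, v) \<in> edges G \<Longrightarrow> \<exists>i\<in>V. u \<in> X i \<and> v \<in> X i"
    and home: "\<And>v. v \<in> verts G \<Longrightarrow> home v \<in> V \<and> v \<in> X (home v)"
    and up: "\<And>v i. v \<in> verts G \<Longrightarrow> i \<in> V \<Longrightarrow> v \<in> X i \<Longrightarrow> i \<noteq> home v \<Longrightarrow> i \<noteq> r \<and> v \<in> X (par i)"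
  shows "tree_decomposition G (parent_tree V r par) X"
  unfolding tree_decomposition_def
proof (intro conjI allI ballI impI)
  show "is_tree (parent_tree V r par)" using is_tree_parent_tree[OF fin r] .
  fix v assume v: "v \<in> verts G"
  define B where "B = {i \<in> V. v \<in> X i}"
  have reach: "(i, home v) \<in> (edges (parent_tree V r par) \<inter> B \<times> B)\<^sup>*" if "i \<in> B" for i
    by (rule parent_tree_reach) (use up v that parent in \<open>auto simp: B_def\<close>)
  have "{i \<in> verts (parent_tree V r par). v \<in> X i} = B"
    by (simp add: B_def parent_tree_def)
  moreover have "induced (parent_tree V r par) B = (B, edges (parent_tree V r par) \<inter> B \<times> B)"
    by (rule induced_subset_eq) (auto simp: B_def parent_tree_def)
  ultimately show "connected_graph (induced (parent_tree V r par) {i \<in> verts (parent_tree V r par). v \<in> X i})"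
    using connected_graph_rtrancl_sym[OF sym_parent_tree, of "home v" B] reach home[OF v]
    by (simp add: B_def)
next
  show "\<And>i. i \<in> verts (parent_tree V r par) \<Longrightarrow> X i \<subseteq> verts G"
    using bags by (simp add: parent_tree_def)
  show "\<And>v. v \<in> verts G \<Longrightarrow> \<exists>i\<in>verts (parent_tree V r par). v \<in> X i"
    using home by (fastforce simp: parent_tree_def)
  show "\<And>u v. (u, v) \<in> edges G \<Longrightarrow> \<exists>i\<in>verts (parent_tree V r par). u \<in> X i \<and> v \<in> X i"
    using edge by (simp add: parent_tree_def)
qed

end

lemma treewidth_le_td_width: "tree_decomposition G T X \<Longrightarrow> treewidth G \<le> td_width T X"
  unfolding treewidth_def by (rule Least_le) blast

lemma tree_decomposition_tree:
  "tree_decomposition G T X \<Longrightarrow> finite (verts T) \<and> verts T \<noteq> {}"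
  unfolding tree_decomposition_def is_tree_def wf_graph_def connected_graph_def by blast

lemma treewidth_le_bags:
  assumes td: "tree_decomposition G T X" and small: "\<And>i. i \<in> verts T \<Longrightarrow> card (X i) \<le> m"
  shows "treewidth G \<le> m - 1"
proof -
  have "Max ((\<lambda>i. card (X i)) ` verts T) \<le> m"
    using tree_decomposition_tree[OF td] small by auto
  then show ?thesis
    using treewidth_le_td_width[OF td] unfolding td_width_def by linarith
qed

lemma bag_le_td_width:
  "tree_decomposition G T X \<Longrightarrow> i \<in> verts T \<Longrightarrow> card (X i) - 1 \<le> td_width T X"
  unfolding td_width_def using tree_decomposition_tree
  by (meson Max_ge diff_le_mono finite_imageI imageI)

lemma tree_decomposition_single_bag:
  assumes "wf_graph G"
  shows "tree_decomposition G ({0}, {}) (\<lambda>_. verts G)"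
proof -
  have "\<not> has_cycle ({0}, {})" unfolding has_cycle_def by simp
  then have "is_tree ({0}, {})"
    unfolding is_tree_def wf_graph_def connected_graph_def by auto
  then show ?thesis
    using assms unfolding tree_decomposition_def connected_graph_def induced_def
    by (auto dest: wf_graph_edge_verts)
qed

lemma treewidth_obtains_decomposition:
  assumes "wf_graph G"
  obtains T X where "tree_decomposition G T X" "td_width T X = treewidth G"
  using LeastI_ex[of "\<lambda>w. \<exists>T X. tree_decomposition G T X \<and> td_width T X = w"]
    tree_decomposition_single_bag[OF assms] that unfolding treewidth_def by blast

subsection \<open>Lower bounds for treewidth\<close>

lemma has_cycle_if_path_closes:
  assumes vs: "is_path T vs" and k: "k + 2 < length vs" and e: "(last vs, vs ! k) \<in> edges T"
  shows "has_cycle T"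
  unfolding has_cycle_def
proof (intro exI conjI)
  show "length (drop k vs) \<ge> 3" "distinct (drop k vs)" "set (drop k vs) \<subseteq> verts T"
    using k vs set_drop_subset[of k vs] unfolding is_path_def by auto
  show "\<forall>i. i + 1 < length (drop k vs) \<longrightarrow> (drop k vs ! i, drop k vs ! (i + 1)) \<in> edges T"
    using vs unfolding is_path_def by (auto simp: add.commute add.left_commute)
  show "(last (drop k vs), hd (drop k vs)) \<in> edges T"
    using e k by (simp add: last_drop hd_drop_conv_nth)
qed

text \<open>The last vertex of a longest path in a tree is a leaf.\<close>

lemma tree_has_leaf:
  assumes T: "is_tree T" and two: "card (verts T) \<ge> 2"
  shows "\<exists>i\<in>verts T. \<exists>j. (i, j) \<in> edges T \<and> (\<forall>x. (i, x) \<in> edges T \<longrightarrow> x = j)"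
proof -
  have wf: "wf_graph T" and con: "connected_graph T" and nc: "\<not> has_cycle T"
    using T unfolding is_tree_def by blast+
  note fin = wf_graph_finite[OF wf]
  have "\<not> (\<forall>x\<in>verts T. \<forall>y\<in>verts T. x = y)" using two card_le_Suc0_iff_eq[OF fin] by auto
  then obtain u w where uw: "u \<in> verts T" "w \<in> verts T" "u \<noteq> w" by blast
  then have "(u, w) \<in> (edges T)\<^sup>*" using con unfolding connected_graph_def by auto
  then obtain x where ux: "(u, x) \<in> edges T" using uw(3) by (blast dest: rtrancl_first_step)
  have "is_path T [u, x]"
    using ux wf_graph_irrefl[OF wf] wf_graph_edge_verts[OF wf ux]
    unfolding is_path_def by (auto simp: nth_Cons split: nat.splits)
  then obtain vs where vs: "is_path T vs \<and> length vs \<ge> 2"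
    and longest: "\<And>ys. is_path T ys \<and> length ys \<ge> 2 \<Longrightarrow> length ys \<le> length vs"
  proof -
    have "\<exists>vs. (is_path T vs \<and> length vs \<ge> 2) \<and>
        (\<forall>ys. is_path T ys \<and> length ys \<ge> 2 \<longrightarrow> length ys \<le> length vs)"
      by (rule ex_has_greatest_nat[of _ "[u, x]" _ "Suc (card (verts T))"])
        (use \<open>is_path T [u, x]\<close> is_path_length_le[OF fin] in \<open>auto simp: less_Suc_eq_le\<close>)
    then show ?thesis using that by blast
  qed
  define n where "n = length vs"
  have ne: "vs \<noteq> []" using vs by auto
  then have last: "last vs = vs ! (n - 1)" unfolding n_def by (simp add: last_conv_nth)
  have "(vs ! (n - 2), vs ! (n - 2 + 1)) \<in> edges T" "n - 2 + 1 = n - 1"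
    using vs unfolding is_path_def n_def by auto
  then have e1: "(last vs, vs ! (n - 2)) \<in> edges T" using last symD[OF wf_graph_sym[OF wf]] by auto
  have "z = vs ! (n - 2)" if lz: "(last vs, z) \<in> edges T" for z
  proof -
    have "z \<in> set vs"
    proof (rule ccontr)
      assume "z \<notin> set vs"
      then have "is_path T (vs @ [z])"
        using is_path_snoc[of T vs z] vs ne lz wf_graph_edge_verts[OF wf lz] by auto
      then have "length (vs @ [z]) \<le> length vs" using vs by (intro longest) auto
      then show False by simp
    qed
    then obtain k where k: "k < n" "vs ! k = z" unfolding n_def by (metis in_set_conv_nth)
    have "k \<noteq> n - 1" using k last lz wf_graph_irrefl[OF wf] by auto
    moreover have "\<not> k < n - 2"
    proof
      assume "k < n - 2"
      then have "k + 2 < length vs" unfolding n_def by simp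
      then show False using has_cycle_if_path_closes[of T vs k] vs nc lz k(2) by blast
    qed
    ultimately have "k = n - 2" using k by linarith
    then show ?thesis using k by simp
  qed
  moreover have "last vs \<in> verts T" using vs ne unfolding is_path_def by auto
  ultimately show ?thesis using e1 by blast
qed

lemma has_cycle_induced: "has_cycle (induced G S) \<Longrightarrow> has_cycle G"
  unfolding has_cycle_def by auto

lemma rtrancl_avoid_leaf:
  assumes out: "\<And>x. (i, x) \<in> R \<Longrightarrow> x = j" and into: "\<And>x. (x, i) \<in> R \<Longrightarrow> x = j"
    and uw: "(u, w) \<in> R\<^sup>*" and u: "u \<noteq> i"
  shows "(w \<noteq> i \<longrightarrow> (u, w) \<in> (R \<inter> (- {i}) \<times> (- {i}))\<^sup>*) \<and>
         (w = i \<longrightarrow> (u, j) \<in> (R \<inter> (- {i}) \<times> (- {i}))\<^sup>*)"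
  using uw
proof (induction rule: rtrancl_induct)
  case (step y w)
  show ?case
  proof (cases "y = i")
    case True then show ?thesis using step out by auto
  next
    case False
    then show ?thesis
      using step into by (cases "w = i") (auto intro: rtrancl_into_rtrancl)
  qed
qed (use u in simp)

lemma connected_graph_remove_leaf:
  assumes wf: "wf_graph T" and leaf: "\<And>x. (i, x) \<in> edges T \<Longrightarrow> x = j" and ij: "(i, j) \<in> edges T"
    and S: "S \<subseteq> verts T" and con: "connected_graph (induced T S)" and j: "i \<in> S \<Longrightarrow> j \<in> S"
  shows "connected_graph (induced T (S - {i}))"
proof -
  let ?R = "edges T \<inter> S \<times> S"
  have ji: "j \<noteq> i" using wf_graph_irrefl[OF wf] ij by blast
  have out: "x = j" if "(i, x) \<in> ?R" for x using leaf that by blast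
  have into: "x = j" if "(x, i) \<in> ?R" for x
    using leaf symD[OF wf_graph_sym[OF wf]] that by blast
  have RS: "?R \<inter> (- {i}) \<times> (- {i}) = edges T \<inter> (S - {i}) \<times> (S - {i})" by blast
  have ne: "S - {i} \<noteq> {}"
  proof -
    have "S \<noteq> {}" using con S unfolding connected_graph_def by (simp add: Int_absorb1)
    then show ?thesis using j ji by blast
  qed
  show ?thesis
    unfolding induced_subset_eq[OF Diff_subset[THEN subset_trans, OF S]] connected_graph_def
  proof (intro conjI ballI)
    fix u w assume "u \<in> verts (S - {i}, edges T \<inter> (S - {i}) \<times> (S - {i}))"
      "w \<in> verts (S - {i}, edges T \<inter> (S - {i}) \<times> (S - {i}))"
    then have uw: "u \<in> S" "w \<in> S" "u \<noteq> i" "w \<noteq> i" by auto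
    then have "(u, w) \<in> ?R\<^sup>*"
      using con unfolding connected_graph_def induced_subset_eq[OF S] by simp
    then have "(u, w) \<in> (?R \<inter> (- {i}) \<times> (- {i}))\<^sup>*"
      using rtrancl_avoid_leaf[OF out into] uw(3,4) by blast
    then show "(u, w) \<in> (edges (S - {i}, edges T \<inter> (S - {i}) \<times> (S - {i})))\<^sup>*"
      unfolding RS by simp
  qed (use ne in simp)
qed

lemma tree_decomposition_remove_leaf:
  assumes td: "tree_decomposition G T X" and i: "i \<in> verts T" and ij: "(i, j) \<in> edges T"
    and leaf: "\<And>x. (i, x) \<in> edges T \<Longrightarrow> x = j" and sub: "X i \<subseteq> X j"
  shows "tree_decomposition G (induced T (verts T - {i})) X"
proof -
  have "is_tree T" using td unfolding tree_decomposition_def by blast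
  then have wf: "wf_graph T" and con: "connected_graph T" and nc: "\<not> has_cycle T"
    unfolding is_tree_def by blast+
  have j: "j \<in> verts T" "j \<noteq> i" using wf_graph_edge_verts[OF wf ij] wf_graph_irrefl[OF wf] ij by auto
  let ?T' = "induced T (verts T - {i})"
  have V': "verts ?T' = verts T - {i}" by auto
  have replace: "\<exists>k'\<in>verts ?T'. X k \<subseteq> X k'" if "k \<in> verts T" for k
  proof (cases "k = i")
    case True then show ?thesis using sub j V' by blast
  next
    case False then show ?thesis using that V' by blast
  qed
  have tree: "is_tree ?T'"
    unfolding is_tree_def
  proof (intro conjI)
    show "wf_graph ?T'" using wf_graph_induced[OF wf] .
    have "connected_graph (induced T (verts T))" using con induced_verts[OF wf] by simp
    then show "connected_graph ?T'"
      using connected_graph_remove_leaf[OF wf leaf ij subset_refl] j by blast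
    show "\<not> has_cycle ?T'"
      using nc has_cycle_induced by blast
  qed
  have bags: "\<forall>k\<in>verts ?T'. X k \<subseteq> verts G"
    using td V' unfolding tree_decomposition_def by blast
  have cover: "\<forall>v\<in>verts G. \<exists>k\<in>verts ?T'. v \<in> X k"
    using td replace unfolding tree_decomposition_def by blast
  have edge: "\<forall>u v. (u, v) \<in> edges G \<longrightarrow> (\<exists>k\<in>verts ?T'. u \<in> X k \<and> v \<in> X k)"
    using td replace unfolding tree_decomposition_def by blast
  have "connected_graph (induced ?T' {k \<in> verts ?T'. v \<in> X k})" if v: "v \<in> verts G" for v
  proof -
    let ?S = "{k \<in> verts T. v \<in> X k}"
    have "connected_graph (induced T ?S)" using td v unfolding tree_decomposition_def by blast
    then have "connected_graph (induced T (?S - {i}))"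
      using connected_graph_remove_leaf[OF wf leaf ij, of ?S] sub j by blast
    moreover have "(verts T - {i}) \<inter> {k \<in> verts ?T'. v \<in> X k} = ?S - {i}" using V' by blast
    ultimately show ?thesis by (simp add: induced_induced)
  qed
  then show ?thesis
    using tree bags cover edge unfolding tree_decomposition_def by blast
qed

text \<open>A vertex lying in a single bag forces all its neighbours into that bag.\<close>

lemma bag_ge_degree:
  assumes td: "tree_decomposition G T X" and wf: "wf_graph G"
    and k: "k \<in> verts T" and v: "v \<in> X k" and only: "\<And>k'. k' \<in> verts T \<Longrightarrow> v \<in> X k' \<Longrightarrow> k' = k"
  shows "degree G v + 1 \<le> card (X k)"
proof -
  have X: "X k \<subseteq> verts G" using td k unfolding tree_decomposition_def by blast
  have "insert v {u. (v, u) \<in> edges G} \<subseteq> X k"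
    using td v only unfolding tree_decomposition_def by blast
  moreover have "finite (X k)" using X wf_graph_finite[OF wf] finite_subset by blast
  moreover have "v \<notin> {u. (v, u) \<in> edges G}" using wf_graph_irrefl[OF wf] by blast
  ultimately show ?thesis unfolding degree_def
    by (metis Suc_eq_plus1 card_insert_disjoint card_mono finite_subset subset_insertI)
qed

lemma leaf_private_vertex:
  assumes td: "tree_decomposition G T X" and i: "i \<in> verts T"
    and leaf: "\<And>x. (i, x) \<in> edges T \<Longrightarrow> x = j" and v: "v \<in> X i" "v \<notin> X j"
    and k: "k \<in> verts T" "v \<in> X k"
  shows "k = i"
proof (rule ccontr)
  assume "k \<noteq> i"
  let ?S = "{k \<in> verts T. v \<in> X k}"
  have "v \<in> verts G" using td i v unfolding tree_decomposition_def by blast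
  then have "connected_graph (induced T ?S)" using td unfolding tree_decomposition_def by blast
  then have con: "connected_graph (?S, edges T \<inter> ?S \<times> ?S)"
    using induced_subset_eq[of ?S T] by simp
  have "i \<in> ?S" "k \<in> ?S" using i v k by simp_all
  then have "(i, k) \<in> (edges T \<inter> ?S \<times> ?S)\<^sup>*"
    using con unfolding connected_graph_def fst_conv snd_conv by blast
  moreover have "i \<noteq> k" using \<open>k \<noteq> i\<close> by simp
  ultimately obtain x where x: "(i, x) \<in> edges T \<inter> ?S \<times> ?S"
    by (blast dest: rtrancl_first_step)
  then have "x = j" using leaf by blast
  then show False using x v(2) by blast
qed

text \<open>Removing leaves whose bag is contained in the neighbouring bag, we end at a leaf (or a
  single node) with a vertex that lives in no other bag.\<close>

lemma tree_decomposition_large_bag: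
  assumes wf: "wf_graph G" and ne: "verts G \<noteq> {}"
    and deg: "\<And>v. v \<in> verts G \<Longrightarrow> \<delta> \<le> degree G v"
    and td: "tree_decomposition G T X"
  shows "\<exists>i\<in>verts T. \<delta> + 1 \<le> card (X i)"
  using td
proof (induction "card (verts T)" arbitrary: T rule: less_induct)
  case less
  note td = less.prems
  have T: "is_tree T" and bags: "\<And>i. i \<in> verts T \<Longrightarrow> X i \<subseteq> verts G"
    and cover: "\<And>v. v \<in> verts G \<Longrightarrow> \<exists>i\<in>verts T. v \<in> X i"
    using td unfolding tree_decomposition_def by blast+
  have finT: "finite (verts T)" "verts T \<noteq> {}" using tree_decomposition_tree[OF td] by auto
  have large: "\<delta> + 1 \<le> card (X k)"
    if k: "k \<in> verts T" and v: "v \<in> X k" and only: "\<And>k'. k' \<in> verts T \<Longrightarrow> v \<in> X k' \<Longrightarrow> k' = k"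
    for k v
  proof -
    have "v \<in> verts G" using bags[OF k] v by blast
    then have "\<delta> \<le> degree G v" by (rule deg)
    then show ?thesis using bag_ge_degree[OF td wf k v only] by linarith
  qed
  show ?case
  proof (cases "card (verts T) \<ge> 2")
    case False
    moreover have "card (verts T) \<noteq> 0" using finT by simp
    ultimately have "card (verts T) = 1" by linarith
    then obtain k where k: "verts T = {k}" by (rule card_1_singletonE)
    obtain v where "v \<in> verts G" using ne by auto
    then obtain k' where "k' \<in> verts T" "v \<in> X k'" using cover by blast
    then have "k \<in> verts T" "v \<in> X k" using k by auto
    moreover have "\<And>k'. k' \<in> verts T \<Longrightarrow> v \<in> X k' \<Longrightarrow> k' = k" using k by blast
    ultimately have "\<delta> + 1 \<le> card (X k)" by (rule large)
    then show ?thesis using k by simp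
  next
    case True
    then obtain i j where i: "i \<in> verts T" and ij: "(i, j) \<in> edges T"
      and leaf: "\<And>x. (i, x) \<in> edges T \<Longrightarrow> x = j"
      using tree_has_leaf[OF T] by blast
    show ?thesis
    proof (cases "X i \<subseteq> X j")
      case True
      have V': "verts (induced T (verts T - {i})) = verts T - {i}" by auto
      have lt: "card (verts (induced T (verts T - {i}))) < card (verts T)"
        unfolding V' using card_Diff1_less[OF finT(1) i] .
      obtain k where "k \<in> verts (induced T (verts T - {i}))" "\<delta> + 1 \<le> card (X k)"
        using less.hyps[OF lt tree_decomposition_remove_leaf[OF td i ij leaf True]] by blast
      then show ?thesis using V' by blast
    next
      case False
      then obtain v where v: "v \<in> X i" "v \<notin> X j" by auto
      show ?thesis using large[OF i v(1) leaf_private_vertex[OF td i leaf v]] i by blast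
    qed
  qed
qed

lemma treewidth_ge_min_degree:
  assumes wf: "wf_graph G" and ne: "verts G \<noteq> {}"
    and deg: "\<And>v. v \<in> verts G \<Longrightarrow> \<delta> \<le> degree G v"
  shows "\<delta> \<le> treewidth G"
proof -
  obtain T X where td: "tree_decomposition G T X" and w: "td_width T X = treewidth G"
    using treewidth_obtains_decomposition[OF wf] .
  obtain i where "i \<in> verts T" "\<delta> + 1 \<le> card (X i)"
    using tree_decomposition_large_bag[OF wf ne deg td] by blast
  then have "\<delta> \<le> card (X i) - 1" by simp
  also have "\<dots> \<le> td_width T X" using bag_le_td_width[OF td \<open>i \<in> verts T\<close>] .
  finally show ?thesis using w by simp
qed

lemma tree_decomposition_induced:
  assumes td: "tree_decomposition G T X"
  shows "tree_decomposition (induced G S) T (\<lambda>i. X i \<inter> S)"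
proof -
  have "{i \<in> verts T. v \<in> X i \<inter> S} = {i \<in> verts T. v \<in> X i}" if "v \<in> S" for v
    using that by blast
  then show ?thesis using td unfolding tree_decomposition_def by auto
qed

lemma treewidth_induced_le:
  assumes wf: "wf_graph G"
  shows "treewidth (induced G S) \<le> treewidth G"
proof -
  obtain T X where td: "tree_decomposition G T X" and w: "td_width T X = treewidth G"
    using treewidth_obtains_decomposition[OF wf] .
  have "card (X i \<inter> S) \<le> td_width T X + 1" if "i \<in> verts T" for i
  proof -
    have "finite (X i)"
      using td that wf_graph_finite[OF wf] finite_subset unfolding tree_decomposition_def by metis
    then show ?thesis using bag_le_td_width[OF td that] card_mono[of "X i" "X i \<inter> S"] by auto
  qed
  then have "treewidth (induced G S) \<le> td_width T X + 1 - 1"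
    by (rule treewidth_le_bags[OF tree_decomposition_induced[OF td]])
  then show ?thesis using w by simp
qed

subsection \<open>Elimination forests\<close>

text \<open>\<open>A v\<close> is the set of ancestors of \<open>v\<close> (including \<open>v\<close>) in a rooted forest given by parent
  pointers \<open>par\<close>, with ranks \<open>rk\<close> decreasing towards the roots, which are the vertices with
  \<open>A v = {v}\<close>.\<close>

definition elimination_forest ::
  "graph \<Rightarrow> (nat \<Rightarrow> nat) \<Rightarrow> (nat \<Rightarrow> nat) \<Rightarrow> (nat \<Rightarrow> nat set) \<Rightarrow> nat \<Rightarrow> bool" where
  "elimination_forest G par rk A m \<longleftrightarrow>
     (\<forall>v\<in>verts G. A v \<subseteq> verts G \<and> card (A v) \<le> m \<and>
        (A v = {v} \<or> (par v \<in> verts G \<and> rk (par v) < rk v \<and> A v = insert v (A (par v))))) \<and>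
     (\<forall>u v. (u, v) \<in> edges G \<longrightarrow> u \<in> A v \<or> v \<in> A u)"

definition treedepth_le :: "graph \<Rightarrow> nat \<Rightarrow> bool" where
  "treedepth_le G m \<longleftrightarrow> (\<exists>par rk A. elimination_forest G par rk A m)"

lemma elimination_forestD:
  assumes "elimination_forest G par rk A m"
  shows "v \<in> verts G \<Longrightarrow> A v \<subseteq> verts G"
    and "v \<in> verts G \<Longrightarrow> card (A v) \<le> m"
    and "v \<in> verts G \<Longrightarrow> A v = {v} \<or>
           (par v \<in> verts G \<and> rk (par v) < rk v \<and> A v = insert v (A (par v)))"
    and "(u, w) \<in> edges G \<Longrightarrow> u \<in> A w \<or> w \<in> A u"
  using assms unfolding elimination_forest_def by blast+

lemma elimination_forest_self: "elimination_forest G par rk A m \<Longrightarrow> v \<in> verts G \<Longrightarrow> v \<in> A v"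
  using elimination_forestD(3) by blast

text \<open>The ancestor sets are the bags of a tree decomposition over the forest, made into a tree by
  hanging all roots below one root \<open>r\<close> of minimal rank.\<close>

lemma treewidth_le_elimination_forest:
  assumes wf: "wf_graph G" and ef: "elimination_forest G par rk A m"
  shows "treewidth G \<le> m - 1"
proof (cases "verts G = {}")
  case True
  then show ?thesis
    using treewidth_le_bags[OF tree_decomposition_single_bag[OF wf], of m] by simp
next
  case False
  then obtain r where r: "r \<in> verts G" and rmin: "\<And>v. v \<in> verts G \<Longrightarrow> rk r \<le> rk v"
    using ex_has_least_nat[of "\<lambda>v. v \<in> verts G" _ rk] by blast
  have Ar: "A r = {r}"
    using elimination_forestD(3)[OF ef r] rmin[of "par r"] by auto
  note self = elimination_forest_self[OF ef]
  define par' where "par' v = (if A v = {v} then r else par v)" for v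
  define rk' where "rk' v = (if v = r then 0 else Suc (rk v))" for v
  have "tree_decomposition G (parent_tree (verts G) r par') A"
  proof (rule tree_decomposition_parent_tree[where rk = rk' and home = id])
    fix i assume i: "i \<in> verts G - {r}"
    show "par' i \<in> verts G \<and> rk' (par' i) < rk' i"
      using elimination_forestD(3)[OF ef, of i] i r unfolding par'_def rk'_def by auto
  next
    fix u v assume "(u, v) \<in> edges G"
    then show "\<exists>i\<in>verts G. u \<in> A i \<and> v \<in> A i"
      using elimination_forestD(4)[OF ef] self wf_graph_edge_verts[OF wf] by metis
  next
    fix v i assume "v \<in> verts G" "i \<in> verts G" "v \<in> A i" "i \<noteq> id v"
    then show "i \<noteq> r \<and> v \<in> A (par' i)"
      using elimination_forestD(3)[OF ef, of i] Ar unfolding par'_def by auto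
  qed (use wf_graph_finite[OF wf] r elimination_forestD(1)[OF ef] self in auto)
  then show ?thesis
    by (rule treewidth_le_bags) (use elimination_forestD(2)[OF ef] in \<open>simp add: parent_tree_def\<close>)
qed

lemma treedepth_le_add_vertex:
  assumes wf: "wf_graph G" and r: "r \<in> verts G"
    and td: "treedepth_le (induced G (verts G - {r})) m"
  shows "treedepth_le G (Suc m)"
proof -
  let ?H = "induced G (verts G - {r})"
  obtain par rk A where ef: "elimination_forest ?H par rk A m"
    using td unfolding treedepth_le_def by blast
  have VH: "verts ?H = verts G - {r}" by auto
  define A' where "A' v = (if v = r then {r} else insert r (A v))" for v
  define par' where "par' v = (if A v = {v} then r else par v)" for v
  define rk' where "rk' v = (if v = r then 0 else Suc (rk v))" for v
  have "elimination_forest G par' rk' A' (Suc m)"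
    unfolding elimination_forest_def
  proof (intro conjI ballI allI impI)
    fix v assume v: "v \<in> verts G"
    show "A' v \<subseteq> verts G"
      using elimination_forestD(1)[OF ef, of v] v r VH unfolding A'_def by auto
    show "card (A' v) \<le> Suc m"
    proof (cases "v = r")
      case False
      then have "A v \<subseteq> verts G" "card (A v) \<le> m"
        using elimination_forestD(1,2)[OF ef, of v] v VH by auto
      then have "finite (A v)" "card (A v) \<le> m"
        using wf_graph_finite[OF wf] finite_subset by blast+
      then show ?thesis using False unfolding A'_def by (simp add: card_insert_if)
    qed (simp add: A'_def)
    show "A' v = {v} \<or> (par' v \<in> verts G \<and> rk' (par' v) < rk' v \<and> A' v = insert v (A' (par' v)))"
    proof (cases "v = r")
      case False
      show ?thesis
      proof (cases "A v = {v}")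
        case True
        then show ?thesis using False r unfolding A'_def par'_def rk'_def by (simp add: insert_commute)
      next
        case notroot: False
        then have p: "par v \<in> verts G" "par v \<noteq> r" "rk (par v) < rk v" "A v = insert v (A (par v))"
          using elimination_forestD(3)[OF ef, of v] v VH False by auto
        then show ?thesis
          using False notroot unfolding A'_def par'_def rk'_def by (simp add: insert_commute)
      qed
    qed (simp add: A'_def)
  next
    fix u w assume uw: "(u, w) \<in> edges G"
    show "u \<in> A' w \<or> w \<in> A' u"
    proof (cases "u = r \<or> w = r")
      case False
      then have "(u, w) \<in> edges ?H" using uw wf_graph_edge_verts[OF wf uw] by simp
      then have "u \<in> A w \<or> w \<in> A u" by (rule elimination_forestD(4)[OF ef])
      then show ?thesis using False unfolding A'_def by simp
    next
      case True
      then show ?thesis unfolding A'_def by auto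
    qed
  qed
  then show ?thesis unfolding treedepth_le_def by blast
qed

lemma treedepth_le_components:
  assumes wf: "wf_graph G"
    and comp: "\<And>v. v \<in> verts G \<Longrightarrow> treedepth_le (induced G (component G v)) m"
  shows "treedepth_le G m"
proof -
  have "\<forall>C\<in>component G ` verts G. \<exists>f. elimination_forest (induced G C) (fst f) (fst (snd f)) (snd (snd f)) m"
    using comp unfolding treedepth_le_def by fastforce
  then obtain F where F: "\<And>C. C \<in> component G ` verts G \<Longrightarrow>
      elimination_forest (induced G C) (fst (F C)) (fst (snd (F C))) (snd (snd (F C))) m"
    by (metis bchoice)
  define par where "par v = fst (F (component G v)) v" for v
  define rk where "rk v = fst (snd (F (component G v))) v" for v
  define A where "A v = snd (snd (F (component G v))) v" for v
  have ef: "elimination_forest (induced G (component G v)) (fst (F (component G v)))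
      (fst (snd (F (component G v)))) (snd (snd (F (component G v)))) m" if "v \<in> verts G" for v
    using F that by blast
  have VC: "verts (induced G (component G v)) = component G v" for v
    using component_subset[of G v] by auto
  note same = component_eq[OF wf]
  have "elimination_forest G par rk A m"
    unfolding elimination_forest_def
  proof (intro conjI ballI allI impI)
    fix v assume v: "v \<in> verts G"
    note efv = elimination_forestD[OF ef[OF v], unfolded VC]
    have vC: "v \<in> component G v" using component_self[OF v] .
    show "A v \<subseteq> verts G" using efv(1)[OF vC] component_subset unfolding A_def by blast
    show "card (A v) \<le> m" using efv(2)[OF vC] unfolding A_def .
    show "A v = {v} \<or> (par v \<in> verts G \<and> rk (par v) < rk v \<and> A v = insert v (A (par v)))"
    proof (cases "A v = {v}")
      case False
      then have p: "par v \<in> component G v"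
        "fst (snd (F (component G v))) (par v) < rk v"
        "A v = insert v (snd (snd (F (component G v))) (par v))"
        using efv(3)[OF vC] unfolding A_def par_def rk_def by auto
      moreover have "component G (par v) = component G v" using same p(1) .
      ultimately show ?thesis
        using component_subset[of G v] unfolding A_def rk_def by auto
    qed simp
  next
    fix u w assume uw: "(u, w) \<in> edges G"
    have u: "u \<in> verts G" using wf_graph_edge_verts[OF wf uw] by blast
    have "w \<in> component G u" using component_edge[OF wf component_self[OF u] uw] .
    then have "component G w = component G u" by (rule same)
    moreover have "(u, w) \<in> edges (induced G (component G u))"
      using edges_induced_component[OF wf component_self[OF u] uw] .
    ultimately show "u \<in> A w \<or> w \<in> A u"
      using elimination_forestD(4)[OF ef[OF u]] unfolding A_def by simp
  qed
  then show ?thesis unfolding treedepth_le_def by blast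
qed

lemma treedepth_le_delete:
  assumes "finite Q" "wf_graph G" "Q \<subseteq> verts G" "treedepth_le (induced G (verts G - Q)) m"
  shows "treedepth_le G (card Q + m)"
  using assms
proof (induction Q arbitrary: G m rule: finite_induct)
  case empty
  then show ?case using induced_verts by simp
next
  case (insert q Q)
  let ?G' = "induced G (verts G - Q)"
  have "induced ?G' (verts ?G' - {q}) = induced G (verts G - insert q Q)"
    unfolding induced_induced verts_induced by (rule arg_cong[where f = "induced G"]) blast
  then have "treedepth_le ?G' (Suc m)"
    using treedepth_le_add_vertex[OF wf_graph_induced[OF insert.prems(1)], of q "verts G - Q"]
      insert by simp
  moreover have "Q \<subseteq> verts G" using insert.prems(2) by simp
  ultimately have "treedepth_le G (card Q + Suc m)" using insert.IH[OF insert.prems(1)] by blast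
  then show ?case using insert.hyps by simp
qed

text \<open>If no path starting at \<open>r\<close> has more than \<open>m\<close> vertices, then \<open>r\<close> can be made the root of an
  elimination tree of depth \<open>m\<close>: every component of \<open>G - r\<close> has a vertex adjacent to \<open>r\<close>, from
  which all paths have at most \<open>m - 1\<close> vertices.\<close>

lemma treedepth_le_if_paths_short:
  assumes "wf_graph G" "connected_graph G" "r \<in> verts G"
    and "\<And>vs. is_path G vs \<Longrightarrow> vs \<noteq> [] \<Longrightarrow> hd vs = r \<Longrightarrow> length vs \<le> m"
  shows "treedepth_le G m"
  using assms
proof (induction "card (verts G)" arbitrary: G r m rule: less_induct)
  case less
  note wf = less.prems(1) and r = less.prems(3) and short = less.prems(4)
  have "is_path G [r]" using r unfolding is_path_def by simp
  then obtain m' where m: "m = Suc m'" using short[of "[r]"] by (cases m) auto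
  let ?H = "induced G (verts G - {r})"
  have wfH: "wf_graph ?H" using wf_graph_induced[OF wf] .
  have "treedepth_le (induced ?H (component ?H v)) m'" if v: "v \<in> verts ?H" for v
  proof -
    let ?C = "component ?H v"
    let ?K = "induced ?H ?C"
    obtain u x where u: "u \<in> ?C" and x: "x \<in> {r}" and ux: "(u, x) \<in> edges G"
      using component_edge_to_deleted[OF wf less.prems(2), of r "{r}" v] v r by auto
    have VK: "verts ?K = ?C" using component_subset[of ?H v] by auto
    have CH: "?C \<subseteq> verts G - {r}" using component_subset[of ?H v] by auto
    have "card (verts ?K) < card (verts G)"
      using VK card_mono[OF finite_Diff[OF wf_graph_finite[OF wf]] CH]
        card_Diff1_less[OF wf_graph_finite[OF wf] r]
      by simp
    moreover have "length vs \<le> m'" if p: "is_path ?K vs" "vs \<noteq> []" "hd vs = u" for vs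
    proof -
      have "set vs \<subseteq> ?C" using p(1) VK unfolding is_path_def by blast
      then have "is_path G (r # vs)"
        using is_path_Cons[OF is_path_induced[OF is_path_induced[OF p(1)]] p(2) r] CH ux x p(3)
          symD[OF wf_graph_sym[OF wf]] by blast
      then show ?thesis using short[of "r # vs"] m by simp
    qed
    ultimately show ?thesis
      using less.hyps wf_graph_induced[OF wfH] connected_component[OF wfH v] u VK by blast
  qed
  then have "treedepth_le ?H m'" by (rule treedepth_le_components[OF wfH])
  then show ?case using treedepth_le_add_vertex[OF wf r] m by simp
qed

subsection \<open>Cliques and lollipops\<close>

definition is_clique :: "graph \<Rightarrow> nat set \<Rightarrow> bool" where
  "is_clique G Q \<longleftrightarrow> Q \<subseteq> verts G \<and> (\<forall>x\<in>Q. \<forall>y\<in>Q. x \<noteq> y \<longrightarrow> (x, y) \<in> edges G)"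

lemma verts_lollipop [simp]: "verts (lollipop a b) = {0..<a + b}"
  unfolding lollipop_def by simp

lemma edges_lollipop:
  "(i, j) \<in> edges (lollipop a b) \<longleftrightarrow> i < a + b \<and> j < a + b \<and>
     ((i < a \<and> j < a \<and> i \<noteq> j) \<or> (min i j \<ge> a - 1 \<and> (i = j + 1 \<or> j = i + 1)))"
  unfolding lollipop_def by simp

lemma wf_graph_lollipop: "wf_graph (lollipop a b)"
  unfolding wf_graph_def by (auto simp: edges_lollipop)

lemma connected_lollipop:
  assumes a: "1 \<le> a"
  shows "connected_graph (lollipop a b)"
proof -
  let ?E = "edges (lollipop a b)"
  have "(i, a - 1) \<in> ?E\<^sup>*" if "i < a + b" for i
    using that
  proof (induction i rule: less_induct)
    case (less i)
    show ?case
    proof (cases "i < a")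
      case True
      then have "i = a - 1 \<or> (i, a - 1) \<in> ?E" using less.prems a by (auto simp: edges_lollipop)
      then show ?thesis by auto
    next
      case False
      then have "(i, i - 1) \<in> ?E" using less.prems a by (auto simp: edges_lollipop)
      moreover have "(i - 1, a - 1) \<in> ?E\<^sup>*" using less.IH[of "i - 1"] False less.prems a by auto
      ultimately show ?thesis by (rule converse_rtrancl_into_rtrancl)
    qed
  qed
  then have "connected_graph (verts (lollipop a b), ?E)"
    by (intro connected_graph_rtrancl_sym[OF wf_graph_sym[OF wf_graph_lollipop], of "a - 1"])
      (use a in auto)
  then show ?thesis unfolding verts_lollipop[symmetric] prod.collapse .
qed

lemma is_clique_card_le_treewidth:
  assumes wf: "wf_graph G" and Q: "is_clique G Q" "Q \<noteq> {}"
  shows "card Q - 1 \<le> treewidth G"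
proof -
  have QV: "Q \<subseteq> verts G" using Q unfolding is_clique_def by blast
  have "degree (induced G Q) v = card Q - 1" if "v \<in> Q" for v
  proof -
    have "{u. (v, u) \<in> edges (induced G Q)} = Q - {v}"
      using Q that QV wf_graph_irrefl[OF wf] unfolding is_clique_def by auto
    then show ?thesis
      using that QV finite_subset[OF QV wf_graph_finite[OF wf]] by (simp add: degree_def)
  qed
  then have "card Q - 1 \<le> treewidth (induced G Q)"
    using treewidth_ge_min_degree[OF wf_graph_induced[OF wf], of Q "card Q - 1"] Q QV
    by (simp add: Int_absorb1)
  then show ?thesis using treewidth_induced_le[OF wf, of Q] by linarith
qed

text \<open>Embedding: list the clique with \<open>q\<close> last, then continue along the path.\<close>

lemma contains_lollipop:
  assumes wf: "wf_graph G" and Q: "is_clique G Q" "card Q = a" "q \<in> Q"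
    and path: "is_path G (q # ws)" "length ws = b" "set ws \<inter> Q = {}"
  shows "contains_subgraph G (lollipop a b)"
proof -
  have finQ: "finite Q" using Q(1) wf_graph_finite[OF wf] finite_subset unfolding is_clique_def by blast
  define qs where "qs = sorted_list_of_set (Q - {q})"
  define L where "L = qs @ q # ws"
  have qs: "distinct qs" "set qs = Q - {q}" "length qs = a - 1"
    using finQ Q(2,3) unfolding qs_def by auto
  have a: "0 < a" using Q(2,3) finQ card_gt_0_iff by blast
  have lenL: "length L = a + b" using qs(3) path(2) a unfolding L_def by simp
  have distL: "distinct L" using qs path unfolding L_def is_path_def by auto
  have setL: "set L \<subseteq> verts G" using Q(1,3) qs(2) path(1) unfolding L_def is_clique_def is_path_def by auto
  have headL: "L ! i \<in> Q" if "i < a" for i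
  proof -
    have "L ! i = (qs @ [q]) ! i" using that qs(3) a unfolding L_def by (simp add: nth_append)
    moreover have "(qs @ [q]) ! i \<in> set (qs @ [q])" using that qs(3) a by (intro nth_mem) simp
    moreover have "set (qs @ [q]) = Q" using qs(2) Q(3) by auto
    ultimately show ?thesis by (simp only:)
  qed
  have tailL: "L ! i = (q # ws) ! (i - (a - 1))" if "a - 1 \<le> i" for i
    using that qs(3) unfolding L_def by (simp add: nth_append)
  show ?thesis
    unfolding contains_subgraph_def
  proof (intro exI conjI allI impI)
    show "inj_on (nth L) (verts (lollipop a b))" using inj_on_nth[OF distL] lenL by simp
    show "nth L ` verts (lollipop a b) \<subseteq> verts G" using setL lenL by auto
    fix i j assume "(i, j) \<in> edges (lollipop a b)"
    then have ij: "i < a + b" "j < a + b"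
      "(i < a \<and> j < a \<and> i \<noteq> j) \<or> (min i j \<ge> a - 1 \<and> (i = j + 1 \<or> j = i + 1))"
      by (auto simp: edges_lollipop)
    have step: "(L ! k, L ! (k + 1)) \<in> edges G" if "a - 1 \<le> k" "k + 1 < a + b" for k
    proof -
      have "k - (a - 1) + 1 < length (q # ws)" using that path(2) a by simp
      moreover have "k + 1 - (a - 1) = k - (a - 1) + 1" using that by simp
      ultimately show ?thesis
        using path(1) tailL[of k] tailL[of "k + 1"] that unfolding is_path_def by auto
    qed
    show "(L ! i, L ! j) \<in> edges G"
    proof (cases "i < a \<and> j < a \<and> i \<noteq> j")
      case True
      then have "L ! i \<noteq> L ! j" using distL lenL nth_eq_iff_index_eq by fastforce
      then show ?thesis using Q(1) headL True unfolding is_clique_def by blast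
    next
      case False
      then have "min i j \<ge> a - 1" "i = j + 1 \<or> j = i + 1" using ij by auto
      then show ?thesis
        using step[of i] step[of j] ij symD[OF wf_graph_sym[OF wf]] by auto
    qed
  qed
qed

lemma lollipop_clique:
  assumes "contains_subgraph G (lollipop a b)"
  shows "\<exists>Q. is_clique G Q \<and> card Q = a"
proof -
  obtain f where f: "inj_on f {0..<a + b}" "f ` {0..<a + b} \<subseteq> verts G"
    "\<And>u v. (u, v) \<in> edges (lollipop a b) \<Longrightarrow> (f u, f v) \<in> edges G"
    using assms unfolding contains_subgraph_def by auto
  have "is_clique G (f ` {0..<a})"
    unfolding is_clique_def
  proof (intro conjI ballI impI)
    show "f ` {0..<a} \<subseteq> verts G" using f(2) by auto
    fix x y assume "x \<in> f ` {0..<a}" "y \<in> f ` {0..<a}" "x \<noteq> y"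
    then obtain i j where "i < a" "j < a" "x = f i" "y = f j" by auto
    moreover have "i \<noteq> j" using calculation \<open>x \<noteq> y\<close> by blast
    ultimately show "(x, y) \<in> edges G" using f(3)[of i j] by (simp add: edges_lollipop)
  qed
  moreover have "card (f ` {0..<a}) = a"
    using card_image[OF inj_on_subset[OF f(1)]] by simp
  ultimately show ?thesis by blast
qed

text \<open>A path decomposition: the clique forms bag \<open>0\<close>, and bag \<open>t \<ge> 1\<close> holds the \<open>t\<close>-th edge
  of the tail, \<open>{a + t - 2, a + t - 1}\<close>.\<close>

lemma treewidth_lollipop_le:
  assumes a: "2 \<le> a"
  shows "treewidth (lollipop a b) \<le> a - 1"
proof -
  define X where "X t = (if t = 0 then {0..<a} else {a + t - 2, a + t - 1})" for t
  define home where "home v = (if v < a then 0 else v + 1 - a)" for v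
  have "tree_decomposition (lollipop a b) (parent_tree {0..b} 0 (\<lambda>i. i - 1)) X"
  proof (rule tree_decomposition_parent_tree[where rk = id and home = home])
    fix u v assume "(u, v) \<in> edges (lollipop a b)"
    then have uv: "u < a + b" "v < a + b"
      "(u < a \<and> v < a \<and> u \<noteq> v) \<or> (min u v \<ge> a - 1 \<and> (u = v + 1 \<or> v = u + 1))"
      by (auto simp: edges_lollipop)
    show "\<exists>i\<in>{0..b}. u \<in> X i \<and> v \<in> X i"
    proof (cases "u < a \<and> v < a")
      case True then show ?thesis unfolding X_def by (intro bexI[of _ 0]) auto
    next
      case False
      define t where "t = min u v + 2 - a"
      have "1 \<le> t" "t \<le> b" "{u, v} = {a + t - 2, a + t - 1}"
        using uv False a unfolding t_def by auto
      then show ?thesis unfolding X_def by (intro bexI[of _ t]) auto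
    qed
  next
    fix v i assume v: "v \<in> verts (lollipop a b)" and "i \<in> {0..b}" "v \<in> X i" "i \<noteq> home v"
    then have "i \<noteq> 0" "v = a + i - 2" using a unfolding X_def home_def by (auto split: if_splits)
    then show "i \<noteq> 0 \<and> v \<in> X (i - 1)" using a unfolding X_def by auto
  qed (use a in \<open>auto simp: X_def home_def\<close>)
  then show ?thesis
    by (rule treewidth_le_bags) (use a in \<open>auto simp: X_def parent_tree_def card_insert_if\<close>)
qed

lemma treewidth_lollipop:
  assumes "2 \<le> a"
  shows "treewidth (lollipop a b) = a - 1"
proof -
  have "is_clique (lollipop a b) {0..<a}" unfolding is_clique_def by (auto simp: edges_lollipop)
  then have "a - 1 \<le> treewidth (lollipop a b)"
    using is_clique_card_le_treewidth[OF wf_graph_lollipop] assms by fastforce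
  then show ?thesis using treewidth_lollipop_le[OF assms, of b] by linarith
qed

lemma short_path_if_no_lollipop:
  assumes wf: "wf_graph G" and Q: "is_clique G Q" "card Q = a" "x \<in> Q"
    and no: "\<not> contains_subgraph G (lollipop a b)"
    and vs: "is_path G vs" "vs \<noteq> []" "(x, hd vs) \<in> edges G" "set vs \<inter> Q = {}"
  shows "length vs < b"
proof (rule ccontr)
  assume "\<not> length vs < b"
  have "x \<in> verts G" using Q(1,3) unfolding is_clique_def by blast
  then have "is_path G (x # vs)" using is_path_Cons[OF vs(1,2)] vs(3,4) Q(3) by blast
  then have "is_path G (x # take b vs)" using is_path_take[of G "x # vs" "Suc b"] by simp
  moreover have "length (take b vs) = b" using \<open>\<not> length vs < b\<close> by simp
  moreover have "set (take b vs) \<inter> Q = {}" using vs(4) set_take_subset[of b vs] by blast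
  ultimately show False using contains_lollipop[OF wf Q] no by blast
qed

text \<open>If a connected graph has a clique \<open>Q\<close> of size \<open>a\<close> but no \<open>L a b\<close>, then every component
  of \<open>G - Q\<close> is attached to \<open>Q\<close> at a vertex from which all its paths have fewer than \<open>b\<close>
  vertices; stacking \<open>Q\<close> on top of the resulting elimination trees bounds the treewidth.\<close>

lemma treewidth_le_if_no_lollipop:
  assumes wf: "wf_graph G" and con: "connected_graph G"
    and Q: "is_clique G Q" "card Q = a" "1 \<le> a"
    and no: "\<not> contains_subgraph G (lollipop a b)"
  shows "treewidth G + 2 \<le> a + b"
proof -
  have QV: "Q \<subseteq> verts G" using Q(1) unfolding is_clique_def by blast
  have finQ: "finite Q" using QV wf_graph_finite[OF wf] finite_subset by blast
  obtain q where q: "q \<in> Q" using Q(2,3) by fastforce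
  have "is_path G [q]" using q QV unfolding is_path_def by auto
  then obtain b' where b: "b = Suc b'"
    using no contains_lollipop[OF wf Q(1,2) q, of "[]" b] by (cases b) auto
  let ?H = "induced G (verts G - Q)"
  have wfH: "wf_graph ?H" using wf_graph_induced[OF wf] .
  have "treedepth_le (induced ?H (component ?H v)) b'" if v: "v \<in> verts ?H" for v
  proof -
    let ?C = "component ?H v"
    let ?K = "induced ?H ?C"
    have "v \<in> verts G - Q" using v by simp
    then obtain u x where u: "u \<in> ?C" and x: "x \<in> Q" and ux: "(u, x) \<in> edges G"
      using component_edge_to_deleted[OF wf con q subsetD[OF QV q]] by blast
    have VK: "verts ?K = ?C" using component_subset[of ?H v] by auto
    have CH: "?C \<subseteq> verts G - Q" using component_subset[of ?H v] by auto
    have "length vs \<le> b'" if p: "is_path ?K vs" "vs \<noteq> []" "hd vs = u" for vs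
    proof -
      have "set vs \<inter> Q = {}" using p(1) VK CH unfolding is_path_def by blast
      then have "length vs < b"
        using short_path_if_no_lollipop[OF wf Q(1,2) x no is_path_induced[OF is_path_induced[OF p(1)]] p(2)]
          ux p(3) symD[OF wf_graph_sym[OF wf]] by blast
      then show ?thesis using b by simp
    qed
    then show ?thesis
      using treedepth_le_if_paths_short[OF wf_graph_induced[OF wfH] connected_component[OF wfH v]] u VK
      by blast
  qed
  then have "treedepth_le ?H b'" by (rule treedepth_le_components[OF wfH])
  then have "treedepth_le G (a + b')" using treedepth_le_delete[OF finQ wf QV] Q(2) by simp
  then obtain par rk A where "elimination_forest G par rk A (a + b')"
    unfolding treedepth_le_def by blast
  then have "treewidth G \<le> a + b' - 1" by (rule treewidth_le_elimination_forest[OF wf])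
  then show ?thesis using b Q(3) by linarith
qed

lemma k_connected_degree:
  assumes kc: "k_connected G k" and wf: "wf_graph G" and v: "v \<in> verts G"
  shows "k \<le> degree G v"
proof (rule ccontr)
  define N where "N = {u. (v, u) \<in> edges G}"
  assume "\<not> k \<le> degree G v"
  then have lt: "card N < k" unfolding N_def degree_def by simp
  have NV: "N \<subseteq> verts G" using wf_graph_edge_verts[OF wf] unfolding N_def by blast
  have vN: "v \<notin> N" using wf_graph_irrefl[OF wf] unfolding N_def by blast
  have con: "connected_graph (induced G (verts G - N))"
    using kc NV lt unfolding k_connected_def by blast
  have finN: "finite (insert v N)" using finite_subset[OF NV wf_graph_finite[OF wf]] by simp
  have "card (insert v N) < card (verts G)"
    using kc lt vN finN unfolding k_connected_def by simp
  then have "\<not> verts G \<subseteq> insert v N" using card_mono[OF finN] by (meson not_le)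
  then obtain w where w: "w \<in> verts G" "w \<noteq> v" "w \<notin> N" by blast
  have "(v, w) \<in> (edges (induced G (verts G - N)))\<^sup>*"
    using con v vN w unfolding connected_graph_def by simp
  then obtain y where "(v, y) \<in> edges (induced G (verts G - N))"
    using w(2) by (blast dest: rtrancl_first_step)
  then show False unfolding N_def by auto
qed

lemma kappa_k_connected:
  assumes "wf_graph G" "connected_graph G"
  shows "k_connected G (kappa G)"
  unfolding kappa_def
proof (rule GreatestI_nat[of _ 0 "card (verts G)"])
  show "k_connected G 0"
    using assms wf_graph_finite[OF assms(1)] unfolding k_connected_def connected_graph_def
    by (simp add: card_gt_0_iff)
qed (simp add: k_connected_def)

lemma k_connected_le_kappa: "k_connected G k \<Longrightarrow> k \<le> kappa G"
  unfolding kappa_def by (rule Greatest_le_nat[of _ k "card (verts G)"]) (auto simp: k_connected_def)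

text \<open>A longest path from \<open>q\<close> avoiding \<open>Q\<close> ends at a vertex all of whose neighbours lie on the
  path or in \<open>Q\<close>.\<close>

lemma path_avoiding:
  assumes wf: "wf_graph G" and QV: "Q \<subseteq> verts G" and q: "q \<in> Q"
    and deg: "\<And>v. v \<in> verts G \<Longrightarrow> card Q + b \<le> degree G v"
  shows "\<exists>ws. length ws = b \<and> is_path G (q # ws) \<and> set ws \<inter> Q = {}"
proof -
  note fin = wf_graph_finite[OF wf]
  have finQ: "finite Q" using QV fin finite_subset by blast
  let ?P = "\<lambda>ws. is_path G (q # ws) \<and> set ws \<inter> Q = {}"
  have "?P []" using q QV unfolding is_path_def by auto
  moreover have "length ws < card (verts G)" if "?P ws" for ws
    using is_path_length_le[OF fin, of "q # ws"] that by simp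
  ultimately obtain ws where ws: "?P ws" and longest: "\<And>ys. ?P ys \<Longrightarrow> length ys \<le> length ws"
    using ex_has_greatest_nat[of ?P "[]" length "card (verts G)"] by blast
  show ?thesis
  proof (cases "b \<le> length ws")
    case True
    have "?P (take b ws)"
      using is_path_take[of G "q # ws" "Suc b"] ws by (auto dest: in_set_takeD)
    then show ?thesis using True by (intro exI[of _ "take b ws"]) simp
  next
    case False
    define x where "x = last (q # ws)"
    have x: "x \<in> verts G" using ws unfolding x_def is_path_def by auto
    have "{u. (x, u) \<in> edges G} \<subseteq> set ws \<union> Q"
    proof
      fix y assume y: "y \<in> {u. (x, u) \<in> edges G}"
      show "y \<in> set ws \<union> Q"
      proof (rule ccontr)
        assume out: "y \<notin> set ws \<union> Q"
        then have "is_path G ((q # ws) @ [y])"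
          using is_path_snoc[of G "q # ws" y] ws y q wf_graph_edge_verts[OF wf] unfolding x_def by auto
        then have "?P (ws @ [y])" using ws out by auto
        then show False using longest[of "ws @ [y]"] by simp
      qed
    qed
    then have "degree G x \<le> card (set ws \<union> Q)"
      unfolding degree_def using finQ by (simp add: card_mono)
    also have "\<dots> \<le> length ws + card Q" using card_Un_le[of "set ws" Q] card_length[of ws] by linarith
    finally show ?thesis using deg[OF x] False by linarith
  qed
qed

lemma contains_lollipop_if_kappa:
  assumes wf: "wf_graph G" and con: "connected_graph G"
    and Q: "is_clique G Q" "card Q = a" "1 \<le> a" and kappa: "a + b \<le> kappa G"
  shows "contains_subgraph G (lollipop a b)"
proof -
  have QV: "Q \<subseteq> verts G" using Q(1) unfolding is_clique_def by blast
  obtain q where q: "q \<in> Q" using Q(2,3) by fastforce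
  have "card Q + b \<le> degree G v" if "v \<in> verts G" for v
    using k_connected_degree[OF kappa_k_connected[OF wf con] wf that] kappa Q(2) by simp
  then obtain ws where "length ws = b" "is_path G (q # ws)" "set ws \<inter> Q = {}"
    using path_avoiding[OF wf QV q] by blast
  then show ?thesis using contains_lollipop[OF wf Q(1,2) q] by blast
qed

subsection \<open>Complete multipartite graphs\<close>

text \<open>The complete \<open>p\<close>-partite graph with \<open>N\<close> vertices in each part; the parts are the residue
  classes modulo \<open>p\<close>.\<close>

definition multipartite :: "nat \<Rightarrow> nat \<Rightarrow> graph" where
  "multipartite p N = ({0..<p * N}, {(x, y). x < p * N \<and> y < p * N \<and> x mod p \<noteq> y mod p})"

lemma verts_multipartite [simp]: "verts (multipartite p N) = {0..<p * N}"
  unfolding multipartite_def by simp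

lemma edges_multipartite:
  "(x, y) \<in> edges (multipartite p N) \<longleftrightarrow> x < p * N \<and> y < p * N \<and> x mod p \<noteq> y mod p"
  unfolding multipartite_def by simp

lemma wf_graph_multipartite: "wf_graph (multipartite p N)"
  unfolding wf_graph_def multipartite_def by auto

lemma residue_class_card:
  assumes "0 < p" "c < p"
  shows "card {x. x < p * N \<and> x mod p = c} = N"
proof -
  have "{x. x < p * N \<and> x mod p = c} = (\<lambda>t. c + p * t) ` {..<N}"
  proof (intro equalityI subsetI)
    fix x assume "x \<in> {x. x < p * N \<and> x mod p = c}"
    then have "x = c + p * (x div p)" "x div p < N"
      using assms by (auto simp: less_mult_imp_div_less mult.commute)
    then show "x \<in> (\<lambda>t. c + p * t) ` {..<N}" by blast
  next
    fix x assume "x \<in> (\<lambda>t. c + p * t) ` {..<N}"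
    then obtain t where "t < N" "x = c + p * t" by blast
    moreover have "c + p * t < p * (t + 1)" using assms(2) by simp
    moreover have "p * (t + 1) \<le> p * N" using mult_le_mono2[of "t + 1" N p] \<open>t < N\<close> by simp
    ultimately show "x \<in> {x. x < p * N \<and> x mod p = c}" using assms(2) by auto
  qed
  moreover have "inj_on (\<lambda>t. c + p * t) {..<N}" using assms(1) by (simp add: inj_on_def)
  ultimately show ?thesis by (simp add: card_image)
qed

lemma residue_class_avoiding:
  assumes "0 < p" "c < p" "finite S" "card S < N"
  shows "\<exists>x. x < p * N \<and> x mod p = c \<and> x \<notin> S"
proof (rule ccontr)
  assume "\<not> ?thesis"
  then have "{x. x < p * N \<and> x mod p = c} \<subseteq> S" by blast
  then have "card {x. x < p * N \<and> x mod p = c} \<le> card S" by (rule card_mono[OF assms(3)])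
  then show False using residue_class_card[OF assms(1,2), of N] assms(4) by simp
qed

lemma Suc_mod_neq: "2 \<le> (p::nat) \<Longrightarrow> Suc v mod p \<noteq> v mod p"
  by (simp add: mod_Suc)

lemma degree_multipartite:
  assumes p: "2 \<le> p" and v: "v < p * N"
  shows "N \<le> degree (multipartite p N) v"
proof -
  let ?c = "(v + 1) mod p"
  have "{x. x < p * N \<and> x mod p = ?c} \<subseteq> {u. (v, u) \<in> edges (multipartite p N)}"
    using v Suc_mod_neq[OF p, of v] by (auto simp: edges_multipartite)
  moreover have "finite {u. (v, u) \<in> edges (multipartite p N)}"
    by (rule finite_subset[of _ "{..<p * N}"]) (auto simp: edges_multipartite)
  ultimately have "card {x. x < p * N \<and> x mod p = ?c} \<le> degree (multipartite p N) v"
    unfolding degree_def by (rule card_mono[rotated])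
  then show ?thesis using residue_class_card[of p ?c N] p by simp
qed

lemma connected_multipartite_delete:
  assumes p: "2 \<le> p" and S: "finite S" "card S < N"
  shows "connected_graph (induced (multipartite p N) ({0..<p * N} - S))"
proof -
  define V where "V = {0..<p * N} - S"
  have ind: "induced (multipartite p N) V = (V, edges (multipartite p N) \<inter> V \<times> V)"
    by (rule induced_subset_eq) (auto simp: V_def)
  have in_class: "\<exists>x\<in>V. x mod p = c" if "c < p" for c
    using residue_class_avoiding[OF _ that S] p unfolding V_def by auto
  obtain r where r: "r \<in> V" using in_class[of 0] p by auto
  have "(u, r) \<in> (edges (multipartite p N) \<inter> V \<times> V)\<^sup>*" if u: "u \<in> V" for u
  proof (cases "u mod p = r mod p")
    case False
    then show ?thesis using u r by (auto simp: V_def edges_multipartite)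
  next
    case True
    obtain z where z: "z \<in> V" "z mod p = Suc u mod p" using in_class[of "Suc u mod p"] p by auto
    then have "(u, z) \<in> edges (multipartite p N) \<inter> V \<times> V" "(z, r) \<in> edges (multipartite p N) \<inter> V \<times> V"
      using u r True Suc_mod_neq[OF p, of u] by (auto simp: V_def edges_multipartite)
    then show ?thesis by (meson converse_rtrancl_into_rtrancl r_into_rtrancl)
  qed
  then have "connected_graph (V, edges (multipartite p N) \<inter> V \<times> V)"
    using connected_graph_rtrancl_sym[OF _ r] wf_graph_sym[OF wf_graph_multipartite]
    by (simp add: sym_def)
  then show ?thesis using ind V_def by simp
qed

lemma k_connected_multipartite:
  assumes p: "2 \<le> p" and k: "k < N"
  shows "k_connected (multipartite p N) k"
  unfolding k_connected_def
proof (intro conjI allI impI)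
  have "k < 1 * N" using k by simp
  also have "\<dots> \<le> p * N" using p by (intro mult_le_mono1) simp
  finally show "k < card (verts (multipartite p N))" by simp
  show "connected_graph (multipartite p N)"
    using connected_multipartite_delete[OF p, of "{}" N] k induced_verts[OF wf_graph_multipartite]
    by simp
  fix S assume "S \<subseteq> verts (multipartite p N) \<and> card S < k"
  then show "connected_graph (induced (multipartite p N) (verts (multipartite p N) - S))"
    using connected_multipartite_delete[OF p, of S N] k finite_subset[of S "{0..<p * N}"] by simp
qed

lemma treewidth_multipartite:
  assumes "2 \<le> p" "1 \<le> N"
  shows "N \<le> treewidth (multipartite p N)"
  using treewidth_ge_min_degree[OF wf_graph_multipartite] degree_multipartite assms by simp

lemma clique_multipartite:
  assumes Q: "is_clique (multipartite p N) Q"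
  shows "card Q \<le> p"
proof (cases "p = 0")
  case True
  then show ?thesis using Q unfolding is_clique_def by simp
next
  case False
  have "inj_on (\<lambda>x. x mod p) Q" using Q unfolding is_clique_def inj_on_def by (auto simp: edges_multipartite)
  moreover have "(\<lambda>x. x mod p) ` Q \<subseteq> {..<p}" using False by auto
  ultimately show ?thesis by (metis card_image card_lessThan card_mono finite_lessThan)
qed

text \<open>Consecutive numbers lie in different parts, so the identity embeds \<open>L a b\<close>.\<close>

lemma multipartite_contains_lollipop:
  assumes a: "2 \<le> a" and N: "a + b \<le> a * N"
  shows "contains_subgraph (multipartite a N) (lollipop a b)"
  unfolding contains_subgraph_def
proof (intro exI[of _ id] conjI allI impI)
  show "inj_on id (verts (lollipop a b))" by simp
  show "id ` verts (lollipop a b) \<subseteq> verts (multipartite a N)" using N by auto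
  fix i j assume "(i, j) \<in> edges (lollipop a b)"
  then have "i < a + b" "j < a + b" "(i < a \<and> j < a \<and> i \<noteq> j) \<or> i = Suc j \<or> j = Suc i"
    by (auto simp: edges_lollipop)
  then show "(id i, id j) \<in> edges (multipartite a N)"
    using N Suc_mod_neq[OF a, of i] Suc_mod_neq[OF a, of j] by (auto simp: edges_multipartite)
qed

lemma multipartite_not_contains_lollipop:
  "\<not> contains_subgraph (multipartite p N) (lollipop (Suc p) b)"
  using lollipop_clique clique_multipartite by fastforce

subsection \<open>First-order indistinguishability of multipartite graphs\<close>

lemma finite_free_vars: "finite (free_vars \<phi>)"
  by (induction \<phi>) auto

lemma finite_all_vars: "finite (all_vars \<phi>)"
  by (induction \<phi>) auto

lemma free_vars_subset_all_vars: "free_vars \<phi> \<subseteq> all_vars \<phi>"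
  by (induction \<phi>) auto

text \<open>Every quantified subformula has fewer than \<open>q\<close> free variables: the condition under which
  the back-and-forth argument below never runs out of parts or of vertices in a part.\<close>

fun free_vars_below :: "nat \<Rightarrow> fo \<Rightarrow> bool" where
  "free_vars_below q (Adj x y) = True"
| "free_vars_below q (Eq x y) = True"
| "free_vars_below q (Neg \<phi>) = free_vars_below q \<phi>"
| "free_vars_below q (Conj \<phi> \<psi>) = (free_vars_below q \<phi> \<and> free_vars_below q \<psi>)"
| "free_vars_below q (Disj \<phi> \<psi>) = (free_vars_below q \<phi> \<and> free_vars_below q \<psi>)"
| "free_vars_below q (Ex x \<phi>) = (card (free_vars (Ex x \<phi>)) < q \<and> free_vars_below q \<phi>)"
| "free_vars_below q (All x \<phi>) = (card (free_vars (All x \<phi>)) < q \<and> free_vars_below q \<phi>)"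

lemma card_free_vars_mono: "free_vars \<phi> \<subseteq> free_vars \<psi> \<Longrightarrow> card (free_vars \<phi>) \<le> card (free_vars \<psi>)"
  by (rule card_mono[OF finite_free_vars])

lemma card_all_vars_mono: "all_vars \<phi> \<subseteq> all_vars \<psi> \<Longrightarrow> card (all_vars \<phi>) \<le> card (all_vars \<psi>)"
  by (rule card_mono[OF finite_all_vars])

lemma card_insert_le_Suc: "finite A \<Longrightarrow> card (insert x A) \<le> card A + 1"
  by (simp add: card_insert_if)

lemma free_vars_below_qdepth:
  "card (free_vars \<phi>) + qdepth \<phi> \<le> q \<Longrightarrow> free_vars_below q \<phi>"
proof (induction \<phi>)
  case (Conj \<phi> \<psi>)
  then show ?case using card_free_vars_mono[of \<phi> "Conj \<phi> \<psi>"] card_free_vars_mono[of \<psi> "Conj \<phi> \<psi>"]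
    by simp
next
  case (Disj \<phi> \<psi>)
  then show ?case using card_free_vars_mono[of \<phi> "Disj \<phi> \<psi>"] card_free_vars_mono[of \<psi> "Disj \<phi> \<psi>"]
    by simp
next
  case (Ex x \<phi>)
  have "card (free_vars \<phi>) \<le> card (insert x (free_vars (Ex x \<phi>)))"
    using finite_free_vars[of "Ex x \<phi>"] by (intro card_mono) auto
  also have "\<dots> \<le> card (free_vars (Ex x \<phi>)) + 1"
    by (rule card_insert_le_Suc[OF finite_free_vars])
  finally show ?case using Ex by simp
next
  case (All x \<phi>)
  have "card (free_vars \<phi>) \<le> card (insert x (free_vars (All x \<phi>)))"
    using finite_free_vars[of "All x \<phi>"] by (intro card_mono) auto
  also have "\<dots> \<le> card (free_vars (All x \<phi>)) + 1"
    by (rule card_insert_le_Suc[OF finite_free_vars])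
  finally show ?case using All by simp
qed simp_all

lemma free_vars_below_width:
  "card (all_vars \<phi>) \<le> q \<Longrightarrow> free_vars_below q \<phi>"
proof (induction \<phi>)
  case (Conj \<phi> \<psi>)
  then show ?case using card_all_vars_mono[of \<phi> "Conj \<phi> \<psi>"] card_all_vars_mono[of \<psi> "Conj \<phi> \<psi>"]
    by simp
next
  case (Disj \<phi> \<psi>)
  then show ?case using card_all_vars_mono[of \<phi> "Disj \<phi> \<psi>"] card_all_vars_mono[of \<psi> "Disj \<phi> \<psi>"]
    by simp
next
  case (Ex x \<phi>)
  have "card (free_vars (Ex x \<phi>)) \<le> card (all_vars (Ex x \<phi>) - {x})"
    using free_vars_subset_all_vars[of \<phi>] finite_all_vars[of \<phi>] by (intro card_mono) auto
  also have "\<dots> < card (all_vars (Ex x \<phi>))"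
    by (rule card_Diff1_less[OF finite_all_vars]) simp
  finally have "card (free_vars (Ex x \<phi>)) < card (all_vars (Ex x \<phi>))" .
  moreover have "card (all_vars \<phi>) \<le> card (all_vars (Ex x \<phi>))"
    by (rule card_all_vars_mono) auto
  ultimately show ?case using Ex by simp
next
  case (All x \<phi>)
  have "card (free_vars (All x \<phi>)) \<le> card (all_vars (All x \<phi>) - {x})"
    using free_vars_subset_all_vars[of \<phi>] finite_all_vars[of \<phi>] by (intro card_mono) auto
  also have "\<dots> < card (all_vars (All x \<phi>))"
    by (rule card_Diff1_less[OF finite_all_vars]) simp
  finally have "card (free_vars (All x \<phi>)) < card (all_vars (All x \<phi>))" .
  moreover have "card (all_vars \<phi>) \<le> card (all_vars (All x \<phi>))"
    by (rule card_all_vars_mono) auto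
  ultimately show ?case using All by simp
qed simp_all

text \<open>Assignments \<open>s\<close> into \<open>multipartite p1 N\<close> and \<open>t\<close> into \<open>multipartite p2 N\<close> that agree, on
  the variables in \<open>F\<close>, about equality and about lying in the same part (i.e. non-adjacency).\<close>

definition partial_iso :: "(nat \<Rightarrow> nat) \<Rightarrow> (nat \<Rightarrow> nat) \<Rightarrow> nat set \<Rightarrow> nat \<Rightarrow> nat \<Rightarrow> nat \<Rightarrow> bool" where
  "partial_iso s t F p1 p2 N \<longleftrightarrow> (\<forall>x\<in>F. s x < p1 * N \<and> t x < p2 * N) \<and>
     (\<forall>x\<in>F. \<forall>y\<in>F. (s x = s y \<longleftrightarrow> t x = t y) \<and> (s x mod p1 = s y mod p1 \<longleftrightarrow> t x mod p2 = t y mod p2))"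

lemma partial_iso_sym: "partial_iso s t F p1 p2 N \<Longrightarrow> partial_iso t s F p2 p1 N"
  unfolding partial_iso_def by metis

lemma partial_iso_mono: "partial_iso s t F p1 p2 N \<Longrightarrow> F' \<subseteq> F \<Longrightarrow> partial_iso s t F' p1 p2 N"
  unfolding partial_iso_def by blast

text \<open>The answer \<open>w\<close> to \<open>v\<close>: the image of an equal vertex if there is one; otherwise a new vertex
  in the part matching that of \<open>v\<close> (which has fewer than \<open>N\<close> used vertices), or in an unused part
  (there are fewer than \<open>p2\<close> used parts).\<close>

lemma partial_iso_answer:
  assumes iso: "partial_iso s t F p1 p2 N" and fin: "finite F"
    and small: "card F < p2" "card F < N" and v: "v < p1 * N"
  shows "\<exists>w<p2 * N. \<forall>y\<in>F. (v = s y \<longleftrightarrow> w = t y) \<and> (v mod p1 = s y mod p1 \<longleftrightarrow> w mod p2 = t y mod p2)"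
proof -
  have p2: "0 < p2" using small by simp
  have bound: "\<And>y. y \<in> F \<Longrightarrow> t y < p2 * N"
    and agree: "\<And>y z. y \<in> F \<Longrightarrow> z \<in> F \<Longrightarrow>
      (s y = s z \<longleftrightarrow> t y = t z) \<and> (s y mod p1 = s z mod p1 \<longleftrightarrow> t y mod p2 = t z mod p2)"
    using iso unfolding partial_iso_def by blast+
  show ?thesis
  proof (cases "\<exists>y0\<in>F. s y0 = v")
    case True
    then obtain y0 where y0: "y0 \<in> F" "s y0 = v" by blast
    show ?thesis using agree[OF y0(1)] bound[OF y0(1)] y0(2) by (intro exI[of _ "t y0"]) auto
  next
    case new: False
    show ?thesis
    proof (cases "\<exists>y0\<in>F. s y0 mod p1 = v mod p1")
      case True
      then obtain y0 where y0: "y0 \<in> F" "s y0 mod p1 = v mod p1" by blast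
      have "card (t ` F) < N" using small card_image_le[OF fin, of t] by linarith
      then obtain w where w: "w < p2 * N" "w mod p2 = t y0 mod p2" "w \<notin> t ` F"
        using residue_class_avoiding[OF p2 _ finite_imageI[OF fin]] p2 by (meson mod_less_divisor)
      show ?thesis using agree[OF y0(1)] y0(2) w new by (intro exI[of _ w]) auto
    next
      case newpart: False
      have "card ((\<lambda>y. t y mod p2) ` F) < p2" using small card_image_le[OF fin] by (meson le_less_trans)
      then have "\<not> {..<p2} \<subseteq> (\<lambda>y. t y mod p2) ` F"
        using card_mono[OF finite_imageI[OF fin]] by fastforce
      then obtain c where c: "c < p2" "c \<notin> (\<lambda>y. t y mod p2) ` F" by auto
      have "p2 * 1 \<le> p2 * N" using small by (intro mult_le_mono2) simp
      then have "c < p2 * N" using c by linarith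
      moreover have "c mod p2 \<noteq> t y mod p2" if "y \<in> F" for y
        using c that by auto
      ultimately show ?thesis using newpart new by (intro exI[of _ c]) (metis mod_mod_trivial)
    qed
  qed
qed

lemma partial_iso_extend:
  assumes iso: "partial_iso s t F p1 p2 N" and fin: "finite F" and x: "x \<notin> F"
    and small: "card F < p2" "card F < N" and v: "v < p1 * N"
  shows "\<exists>w<p2 * N. partial_iso (s(x := v)) (t(x := w)) (insert x F) p1 p2 N"
proof -
  obtain w where w: "w < p2 * N"
    and ans: "\<And>y. y \<in> F \<Longrightarrow> (v = s y \<longleftrightarrow> w = t y) \<and> (v mod p1 = s y mod p1 \<longleftrightarrow> w mod p2 = t y mod p2)"
    using partial_iso_answer[OF iso fin small v] by blast
  then have ans': "\<And>y. y \<in> F \<Longrightarrow>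
      (s y = v \<longleftrightarrow> t y = w) \<and> (s y mod p1 = v mod p1 \<longleftrightarrow> t y mod p2 = w mod p2)"
    by metis
  have "partial_iso (s(x := v)) (t(x := w)) (insert x F) p1 p2 N"
    unfolding partial_iso_def
  proof (intro conjI ballI)
    fix y z assume y: "y \<in> insert x F" and z: "z \<in> insert x F"
    show "((s(x := v)) y = (s(x := v)) z) = ((t(x := w)) y = (t(x := w)) z)"
      "((s(x := v)) y mod p1 = (s(x := v)) z mod p1) = ((t(x := w)) y mod p2 = (t(x := w)) z mod p2)"
      using y z iso ans ans' x unfolding partial_iso_def by auto
  qed (use iso v w x in \<open>auto simp: partial_iso_def\<close>)
  then show ?thesis using w by blast
qed

lemma partial_iso_quantifier:
  assumes H: "\<And>v w. partial_iso (s(x := v)) (t(x := w)) (insert x F) p1 p2 N \<Longrightarrow> A v \<longleftrightarrow> B w"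
    and iso: "partial_iso s t F p1 p2 N" and fin: "finite F" and x: "x \<notin> F"
    and small: "card F < p1" "card F < p2" "card F < N"
  shows "(\<exists>v<p1 * N. A v) \<longleftrightarrow> (\<exists>w<p2 * N. B w)" and "(\<forall>v<p1 * N. A v) \<longleftrightarrow> (\<forall>w<p2 * N. B w)"
proof -
  have forward: "\<exists>w<p2 * N. A v \<longleftrightarrow> B w" if "v < p1 * N" for v
    using partial_iso_extend[OF iso fin x small(2,3) that] H by blast
  have backward: "\<exists>v<p1 * N. A v \<longleftrightarrow> B w" if "w < p2 * N" for w
    using partial_iso_extend[OF partial_iso_sym[OF iso] fin x small(1,3) that] H partial_iso_sym
    by blast
  show "(\<exists>v<p1 * N. A v) \<longleftrightarrow> (\<exists>w<p2 * N. B w)" "(\<forall>v<p1 * N. A v) \<longleftrightarrow> (\<forall>w<p2 * N. B w)"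
    using forward backward by blast+
qed

lemma sat_multipartite_Ex: "sat (multipartite p N) s (Ex x \<phi>) \<longleftrightarrow> (\<exists>v<p * N. sat (multipartite p N) (s(x := v)) \<phi>)"
  by (auto simp: Bex_def)

lemma sat_multipartite_All: "sat (multipartite p N) s (All x \<phi>) \<longleftrightarrow> (\<forall>v<p * N. sat (multipartite p N) (s(x := v)) \<phi>)"
  by (auto simp: Ball_def)

lemma sat_multipartite_quantifier_iff:
  assumes IH: "\<And>s t. partial_iso s t (free_vars \<phi>) p1 p2 N \<Longrightarrow>
      sat (multipartite p1 N) s \<phi> \<longleftrightarrow> sat (multipartite p2 N) t \<phi>"
    and iso: "partial_iso s t (free_vars \<phi> - {x}) p1 p2 N"
    and small: "card (free_vars \<phi> - {x}) < q" "q \<le> p1" "q \<le> p2" "q \<le> N"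
  shows "sat (multipartite p1 N) s (Ex x \<phi>) \<longleftrightarrow> sat (multipartite p2 N) t (Ex x \<phi>)"
    and "sat (multipartite p1 N) s (All x \<phi>) \<longleftrightarrow> sat (multipartite p2 N) t (All x \<phi>)"
proof -
  let ?F = "free_vars \<phi> - {x}"
  have step: "sat (multipartite p1 N) (s(x := v)) \<phi> \<longleftrightarrow> sat (multipartite p2 N) (t(x := w)) \<phi>"
    if "partial_iso (s(x := v)) (t(x := w)) (insert x ?F) p1 p2 N" for v w
  proof -
    have "free_vars \<phi> \<subseteq> insert x ?F" by blast
    then show ?thesis by (rule IH[OF partial_iso_mono[OF that]])
  qed
  have F: "x \<notin> ?F" "card ?F < p1" "card ?F < p2" "card ?F < N" using small by auto
  note quantifier = partial_iso_quantifier[OF step iso finite_Diff[OF finite_free_vars] F]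
  show "sat (multipartite p1 N) s (Ex x \<phi>) \<longleftrightarrow> sat (multipartite p2 N) t (Ex x \<phi>)"
    unfolding sat_multipartite_Ex by (rule quantifier(1))
  show "sat (multipartite p1 N) s (All x \<phi>) \<longleftrightarrow> sat (multipartite p2 N) t (All x \<phi>)"
    unfolding sat_multipartite_All by (rule quantifier(2))
qed

lemma sat_multipartite_iff:
  assumes q: "q \<le> p1" "q \<le> p2" "q \<le> N"
  shows "partial_iso s t (free_vars \<phi>) p1 p2 N \<Longrightarrow> free_vars_below q \<phi> \<Longrightarrow>
    sat (multipartite p1 N) s \<phi> \<longleftrightarrow> sat (multipartite p2 N) t \<phi>"
proof (induction \<phi> arbitrary: s t)
  case (Adj x y)
  then show ?case unfolding partial_iso_def by (simp add: edges_multipartite)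
next
  case (Eq x y)
  then show ?case unfolding partial_iso_def by simp
next
  case (Conj \<phi> \<psi>)
  then show ?case using Conj.IH[OF partial_iso_mono[OF Conj.prems(1)]] by simp
next
  case (Disj \<phi> \<psi>)
  then show ?case using Disj.IH[OF partial_iso_mono[OF Disj.prems(1)]] by simp
next
  case (Ex x \<phi>)
  have "sat (multipartite p1 N) s' \<phi> \<longleftrightarrow> sat (multipartite p2 N) t' \<phi>"
    if "partial_iso s' t' (free_vars \<phi>) p1 p2 N" for s' t'
    using Ex.IH[OF that] Ex.prems(2) by simp
  then show ?case
    by (rule sat_multipartite_quantifier_iff(1)) (use Ex.prems q in simp_all)
next
  case (All x \<phi>)
  have "sat (multipartite p1 N) s' \<phi> \<longleftrightarrow> sat (multipartite p2 N) t' \<phi>"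
    if "partial_iso s' t' (free_vars \<phi>) p1 p2 N" for s' t'
    using All.IH[OF that] All.prems(2) by simp
  then show ?case
    by (rule sat_multipartite_quantifier_iff(2)) (use All.prems q in simp_all)
qed simp

lemma multipartite_models_iff:
  assumes "sentence \<Phi>" "free_vars_below q \<Phi>" "q \<le> p1" "q \<le> p2" "q \<le> N"
  shows "models (multipartite p1 N) \<Phi> \<longleftrightarrow> models (multipartite p2 N) \<Phi>"
proof -
  have "partial_iso s t (free_vars \<Phi>) p1 p2 N" for s t
    using assms(1) unfolding sentence_def partial_iso_def by simp
  then have "sat (multipartite p1 N) s \<Phi> \<longleftrightarrow> sat (multipartite p2 N) t \<Phi>" for s t
    using sat_multipartite_iff[OF assms(3-5)] assms(2) by blast
  then show ?thesis unfolding models_def by blast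
qed

subsection \<open>The clique sentence\<close>

text \<open>\<open>clique_formula n k\<close> quantifies the variables \<open>k, \<dots>, k + n - 1\<close>, each adjacent to all
  variables below it. (The dummy \<open>Eq 0 0\<close> at the bottom is bound as soon as \<open>n \<ge> 1\<close> and
  \<open>k = 0\<close>.)\<close>

fun adj_all :: "nat \<Rightarrow> nat \<Rightarrow> fo" where
  "adj_all 0 k = Eq k k"
| "adj_all (Suc i) k = Conj (Adj i k) (adj_all i k)"

primrec clique_formula :: "nat \<Rightarrow> nat \<Rightarrow> fo" where
  "clique_formula 0 k = Eq 0 0"
| "clique_formula (Suc n) k = Ex k (Conj (adj_all k k) (clique_formula n (Suc k)))"

definition clique_sentence :: "nat \<Rightarrow> fo" where
  "clique_sentence a = clique_formula a 0"

lemma sat_adj_all: "sat G s (adj_all i k) \<longleftrightarrow> (\<forall>j<i. (s j, s k) \<in> edges G)"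
  by (induction i) (auto simp: less_Suc_eq)

lemma qdepth_clique_formula: "qdepth (clique_formula n k) = n"
proof -
  have "qdepth (adj_all i k) = 0" for i k by (induction i) auto
  then show ?thesis by (induction n arbitrary: k) auto
qed

lemma all_vars_clique_formula: "all_vars (clique_formula n k) \<subseteq> insert 0 {..<k + n}"
proof -
  have adj: "all_vars (adj_all i k) \<subseteq> insert k {..<i}" for i k by (induction i) auto
  show ?thesis
  proof (induction n arbitrary: k)
    case (Suc n)
    then show ?case using adj[of k k] by fastforce
  qed simp
qed

lemma free_vars_clique_formula: "free_vars (clique_formula n k) \<subseteq> insert 0 {..<k}"
proof -
  have adj: "free_vars (adj_all i k) \<subseteq> insert k {..<i}" for i k by (induction i) auto
  show ?thesis
  proof (induction n arbitrary: k)
    case (Suc n)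
    then show ?case using adj[of k k] by fastforce
  qed simp
qed

lemma sentence_clique_sentence: "1 \<le> a \<Longrightarrow> sentence (clique_sentence a)"
  using free_vars_clique_formula[of "a - 1" 1] unfolding sentence_def clique_sentence_def
  by (cases a) auto

lemma var_width_clique_sentence: "1 \<le> a \<Longrightarrow> var_width (clique_sentence a) \<le> a"
  using card_mono[OF _ all_vars_clique_formula[of a 0]] unfolding var_width_def clique_sentence_def
  by (simp add: insert_absorb)

lemma sat_clique_formula:
  "sat G s (clique_formula n k) \<longleftrightarrow> (\<exists>g. (\<forall>i<k. g i = s i) \<and>
     (\<forall>j. k \<le> j \<and> j < k + n \<longrightarrow> g j \<in> verts G \<and> (\<forall>i<j. (g i, g j) \<in> edges G)))"
proof (induction n arbitrary: k s)
  case 0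
  show ?case by (auto intro: exI[of _ s])
next
  case (Suc n)
  show ?case
  proof
    assume "sat G s (clique_formula (Suc n) k)"
    then obtain v where v: "v \<in> verts G" "\<forall>j<k. (s j, v) \<in> edges G"
      and rest: "sat G (s(k := v)) (clique_formula n (Suc k))"
      by (auto simp: sat_adj_all)
    obtain g where g: "\<forall>i<Suc k. g i = (s(k := v)) i"
      "\<forall>j. Suc k \<le> j \<and> j < Suc k + n \<longrightarrow> g j \<in> verts G \<and> (\<forall>i<j. (g i, g j) \<in> edges G)"
      using rest Suc.IH by blast
    have "g j \<in> verts G \<and> (\<forall>i<j. (g i, g j) \<in> edges G)" if "k \<le> j" "j < k + Suc n" for j
      using g v that by (cases "j = k") auto
    then show "\<exists>g. (\<forall>i<k. g i = s i) \<and>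
        (\<forall>j. k \<le> j \<and> j < k + Suc n \<longrightarrow> g j \<in> verts G \<and> (\<forall>i<j. (g i, g j) \<in> edges G))"
      using g(1) by (intro exI[of _ g]) auto
  next
    assume "\<exists>g. (\<forall>i<k. g i = s i) \<and>
        (\<forall>j. k \<le> j \<and> j < k + Suc n \<longrightarrow> g j \<in> verts G \<and> (\<forall>i<j. (g i, g j) \<in> edges G))"
    then obtain g where g: "\<forall>i<k. g i = s i"
      "\<forall>j. k \<le> j \<and> j < k + Suc n \<longrightarrow> g j \<in> verts G \<and> (\<forall>i<j. (g i, g j) \<in> edges G)"
      by blast
    have "\<forall>i<Suc k. g i = (s(k := g k)) i" using g(1) by (auto simp: less_Suc_eq)
    moreover have "\<forall>j. Suc k \<le> j \<and> j < Suc k + n \<longrightarrow> g j \<in> verts G \<and> (\<forall>i<j. (g i, g j) \<in> edges G)"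
      using g(2) by auto
    ultimately have "sat G (s(k := g k)) (clique_formula n (Suc k))" using Suc.IH by blast
    moreover have "g k \<in> verts G" "\<forall>j<k. (s j, g k) \<in> edges G" using g by auto
    ultimately show "sat G s (clique_formula (Suc n) k)" by (auto simp: sat_adj_all)
  qed
qed

lemma models_clique_sentence:
  assumes wf: "wf_graph G"
  shows "models G (clique_sentence a) \<longleftrightarrow> (\<exists>Q. is_clique G Q \<and> card Q = a)"
proof -
  let ?P = "\<lambda>g. \<forall>j<a. g j \<in> verts G \<and> (\<forall>i<j. (g i, g j) \<in> edges G)"
  have sat: "sat G s (clique_sentence a) \<longleftrightarrow> (\<exists>g. ?P g)" for s
    unfolding clique_sentence_def sat_clique_formula by simp
  have "(\<exists>g. ?P g) \<longleftrightarrow> (\<exists>Q. is_clique G Q \<and> card Q = a)"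
  proof
    assume "\<exists>g. ?P g"
    then obtain g where g: "?P g" by blast
    have edge: "(g i, g j) \<in> edges G" if "i < a" "j < a" "i \<noteq> j" for i j
      using g that symD[OF wf_graph_sym[OF wf]] by (cases "i < j") (auto simp: not_less_iff_gr_or_eq)
    have "inj_on g {..<a}" using edge wf_graph_irrefl[OF wf] by (metis inj_onI lessThan_iff)
    then have "card (g ` {..<a}) = a" by (simp add: card_image)
    moreover have "is_clique G (g ` {..<a})" unfolding is_clique_def using g edge by auto
    ultimately show "\<exists>Q. is_clique G Q \<and> card Q = a" by blast
  next
    assume "\<exists>Q. is_clique G Q \<and> card Q = a"
    then obtain Q where Q: "is_clique G Q" "card Q = a" by blast
    have fin: "finite Q" using Q(1) wf_graph_finite[OF wf] finite_subset unfolding is_clique_def by blast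
    let ?qs = "sorted_list_of_set Q"
    have qs: "length ?qs = a" "set ?qs = Q" "distinct ?qs" using fin Q(2) by auto
    have "?P (nth ?qs)"
    proof (intro allI impI conjI)
      fix j i assume "j < a" "i < j"
      then have "?qs ! i \<in> Q" "?qs ! j \<in> Q" "?qs ! i \<noteq> ?qs ! j"
        using qs nth_mem[of i ?qs] nth_mem[of j ?qs] nth_eq_iff_index_eq[OF qs(3), of i j] by auto
      then show "(?qs ! i, ?qs ! j) \<in> edges G" using Q(1) unfolding is_clique_def by blast
    next
      fix j assume "j < a"
      then show "?qs ! j \<in> verts G" using qs nth_mem[of j ?qs] Q(1) unfolding is_clique_def by auto
    qed
    then show "\<exists>g. ?P g" by blast
  qed
  then show ?thesis unfolding models_def sat by blast
qed

lemma Least_measure_eq: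
  fixes \<mu> :: "'a \<Rightarrow> nat"
  assumes "P \<Phi>" "\<mu> \<Phi> \<le> a" "\<And>\<Psi>. P \<Psi> \<Longrightarrow> a \<le> \<mu> \<Psi>"
  shows "(LEAST d. \<exists>\<Phi>. P \<Phi> \<and> \<mu> \<Phi> = d) = a"
proof (rule Least_equality)
  show "\<exists>\<Phi>. P \<Phi> \<and> \<mu> \<Phi> = a" using assms le_antisym by blast
qed (use assms(3) in blast)

lemma defines_lollipop_clique_sentence:
  assumes a: "1 \<le> a"
    and large: "\<And>G Q. wf_graph G \<Longrightarrow> connected_graph G \<Longrightarrow> k \<le> \<pi> G \<Longrightarrow> is_clique G Q \<Longrightarrow>
      card Q = a \<Longrightarrow> contains_subgraph G (lollipop a b)"
  shows "defines_subgraph \<pi> (lollipop a b) (clique_sentence a)"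
  unfolding defines_subgraph_def
proof (intro conjI exI[of _ k] allI impI)
  show "sentence (clique_sentence a)" using sentence_clique_sentence[OF a] .
  fix G assume G: "wf_graph G \<and> connected_graph G \<and> k \<le> \<pi> G"
  then show "models G (clique_sentence a) \<longleftrightarrow> contains_subgraph G (lollipop a b)"
    using models_clique_sentence[of G a] large[of G] lollipop_clique by blast
qed

text \<open>Sentences in which every quantified subformula has at most \<open>a - 2\<close> free variables cannot
  tell the complete \<open>a\<close>-partite graph, which contains \<open>L a b\<close>, from the complete
  \<open>(a - 1)\<close>-partite graph, which has no \<open>a\<close>-clique; both have large parameter \<open>\<pi>\<close> when the parts
  are large.\<close>

lemma multipartite_not_defines_lollipop:
  assumes a: "3 \<le> a" and \<Psi>: "sentence \<Psi>" "free_vars_below (a - 1) \<Psi>"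
    and large: "\<And>p N. 2 \<le> p \<Longrightarrow> 1 \<le> N \<Longrightarrow> N - 1 \<le> \<pi> (multipartite p N)"
  shows "\<not> defines_subgraph \<pi> (lollipop a b) \<Psi>"
proof
  assume "defines_subgraph \<pi> (lollipop a b) \<Psi>"
  then obtain k where k: "\<And>G. wf_graph G \<and> connected_graph G \<and> k \<le> \<pi> G \<longrightarrow>
      (models G \<Psi> \<longleftrightarrow> contains_subgraph G (lollipop a b))"
    unfolding defines_subgraph_def by blast
  define N where "N = k + a + b + 1"
  have good: "wf_graph (multipartite p N) \<and> connected_graph (multipartite p N) \<and> k \<le> \<pi> (multipartite p N)"
    if "2 \<le> p" for p
    using wf_graph_multipartite k_connected_multipartite[OF that, of 0 N] large[OF that, of N]
    unfolding k_connected_def N_def by auto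
  have "N \<le> a * N" using a by simp
  then have "contains_subgraph (multipartite a N) (lollipop a b)"
    using multipartite_contains_lollipop[of a b N] a unfolding N_def by simp
  moreover have "\<not> contains_subgraph (multipartite (a - 1) N) (lollipop a b)"
    using multipartite_not_contains_lollipop[of "a - 1" N b] a by simp
  moreover have "models (multipartite a N) \<Psi> \<longleftrightarrow> models (multipartite (a - 1) N) \<Psi>"
    by (rule multipartite_models_iff[OF \<Psi>]) (auto simp: N_def)
  ultimately show False using k good[of a] good[of "a - 1"] a by auto
qed

lemma D_par_treewidth_lollipop:
  assumes a: "3 \<le> a"
  shows "D_par treewidth (lollipop a b) = a"
  unfolding D_par_def
proof (rule Least_measure_eq)
  show "defines_subgraph treewidth (lollipop a b) (clique_sentence a)"
  proof (rule defines_lollipop_clique_sentence[where k = "a + b - 1"])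
    fix G Q assume "wf_graph G" "connected_graph G" "a + b - 1 \<le> treewidth G" "is_clique G Q" "card Q = a"
    then show "contains_subgraph G (lollipop a b)"
      using treewidth_le_if_no_lollipop[of G Q a b] a by fastforce
  qed (use a in simp)
  show "qdepth (clique_sentence a) \<le> a" by (simp add: clique_sentence_def qdepth_clique_formula)
  fix \<Psi> assume def: "defines_subgraph treewidth (lollipop a b) \<Psi>"
  show "a \<le> qdepth \<Psi>"
  proof (rule ccontr)
    assume "\<not> a \<le> qdepth \<Psi>"
    moreover have "sentence \<Psi>" using def unfolding defines_subgraph_def by blast
    ultimately have "free_vars_below (a - 1) \<Psi>"
      by (intro free_vars_below_qdepth) (simp add: sentence_def)
    moreover have "N - 1 \<le> treewidth (multipartite p N)" if "2 \<le> p" "1 \<le> N" for p N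
      using treewidth_multipartite[OF that] by simp
    ultimately show False
      using multipartite_not_defines_lollipop[OF a \<open>sentence \<Psi>\<close>] def by blast
  qed
qed

lemma W_par_kappa_lollipop:
  assumes a: "3 \<le> a"
  shows "W_par kappa (lollipop a b) = a"
  unfolding W_par_def
proof (rule Least_measure_eq)
  show "defines_subgraph kappa (lollipop a b) (clique_sentence a)"
    by (rule defines_lollipop_clique_sentence[where k = "a + b"])
      (use a contains_lollipop_if_kappa in auto)
  show "var_width (clique_sentence a) \<le> a" using var_width_clique_sentence a by simp
  fix \<Psi> assume def: "defines_subgraph kappa (lollipop a b) \<Psi>"
  show "a \<le> var_width \<Psi>"
  proof (rule ccontr)
    assume "\<not> a \<le> var_width \<Psi>"
    then have "free_vars_below (a - 1) \<Psi>"
      by (intro free_vars_below_width) (simp add: var_width_def)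
    moreover have "N - 1 \<le> kappa (multipartite p N)" if "2 \<le> p" "1 \<le> N" for p N
      using k_connected_le_kappa[OF k_connected_multipartite[OF that(1), of "N - 1" N]] that(2)
      by simp
    ultimately show False
      using multipartite_not_defines_lollipop[OF a] def unfolding defines_subgraph_def by blast
  qed
qed

theorem theorem6:
  shows "(\<forall>a l :: nat. 3 \<le> a \<and> a \<le> l \<longrightarrow>
            (\<exists>F. wf_graph F \<and> connected_graph F \<and> card (verts F) = l \<and>
                 treewidth F = a - 1 \<and> D_par treewidth F \<le> a))
       \<and> (\<forall>a b :: nat. 3 \<le> a \<longrightarrow>
            D_par treewidth (lollipop a b) = a \<and> W_par kappa (lollipop a b) = a)"
proof (intro conjI)
  show "\<forall>a b :: nat. 3 \<le> a \<longrightarrow> D_par treewidth (lollipop a b) = a \<and> W_par kappa (lollipop a b) = a"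
    using D_par_treewidth_lollipop W_par_kappa_lollipop by blast
  show "\<forall>a l :: nat. 3 \<le> a \<and> a \<le> l \<longrightarrow> (\<exists>F. wf_graph F \<and> connected_graph F \<and>
      card (verts F) = l \<and> treewidth F = a - 1 \<and> D_par treewidth F \<le> a)"
  proof (intro allI impI)
    fix a l :: nat assume al: "3 \<le> a \<and> a \<le> l"
    then show "\<exists>F. wf_graph F \<and> connected_graph F \<and> card (verts F) = l \<and>
        treewidth F = a - 1 \<and> D_par treewidth F \<le> a"
      using wf_graph_lollipop connected_lollipop[of a "l - a"] treewidth_lollipop[of a "l - a"]
        D_par_treewidth_lollipop[of a "l - a"]
      by (intro exI[of _ "lollipop a (l - a)"]) auto
  qed
qed

end
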